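(* Let $g:[0,a_0]\to[0,+\infty)$ be a Lipschitz function. For $0\le a_1<a_2\le a_0$ and $b>0$ set $\Gamma(a_1,a_2)=\{(x,g(x)):x\in(a_1,a_2)\}$ and $R(a_1,a_2,b)=\{(x,y):x\in(a_1,a_2),\ y\in(g(x),g(x)+b)\}$. Then $$\lim_{|a_2-a_1|\to0}K\big(\Gamma(a_1,a_2),R(a_1,a_2,b)\big)=+\infty\quad\text{uniformly with respect to }b>0.$$
   Context: For an open set $A$ with Lipschitz boundary and $G\subset\partial A$ with nonempty relative interior in $\partial A$, $K(G,A)=\inf\{\int_A|\nabla v|^2\,dx\,dy: v\in H^1(A),\ \int_G v^2\,d\mathcal{H}^1=1,\ v=0\text{ on }\partial A\setminus G\}$, where $\mathcal{H}^1$ is the one-dimensional Hausdorff measure and boundary values are traces. *)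

theory Defs
  imports "HOL-Analysis.Analysis"
begin

type_synonym pt = "real \<times> real"

text \<open>C-infinity functions on the plane: differentiable everywhere, with all partial
  derivatives again C-infinity (coinductive, i.e. derivatives of every order exist).\<close>
coinductive smooth2 :: "(pt \<Rightarrow> real) \<Rightarrow> bool" where
  "(\<And>x. (f has_derivative (\<lambda>h. Df x \<bullet> h)) (at x)) \<Longrightarrow>
   (\<And>e. e \<in> Basis \<Longrightarrow> smooth2 (\<lambda>x. Df x \<bullet> e)) \<Longrightarrow> smooth2 f"

definition grad :: "(pt \<Rightarrow> real) \<Rightarrow> pt \<Rightarrow> pt" where
  "grad f x = (THE D. (f has_derivative (\<lambda>h. D \<bullet> h)) (at x))"

definition test_fun :: "pt set \<Rightarrow> (pt \<Rightarrow> real) \<Rightarrow> bool" where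
  "test_fun A \<phi> \<longleftrightarrow> smooth2 \<phi> \<and> compact (closure {x. \<phi> x \<noteq> 0}) \<and> closure {x. \<phi> x \<noteq> 0} \<subseteq> A"

definition L2_on :: "pt set \<Rightarrow> (pt \<Rightarrow> real) \<Rightarrow> bool" where
  "L2_on A v \<longleftrightarrow> set_borel_measurable lborel A v \<and> set_integrable lborel A (\<lambda>x. (v x)\<^sup>2)"

definition H1_weak_grad :: "pt set \<Rightarrow> (pt \<Rightarrow> real) \<Rightarrow> (pt \<Rightarrow> pt) \<Rightarrow> bool" where
  "H1_weak_grad A v w \<longleftrightarrow> L2_on A v \<and> (\<forall>e\<in>Basis. L2_on A (\<lambda>x. w x \<bullet> e)) \<and>
     (\<forall>\<phi>. test_fun A \<phi> \<longrightarrow> (\<forall>e\<in>Basis.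
        (LINT x:A|lborel. v x * (grad \<phi> x \<bullet> e)) = - (LINT x:A|lborel. \<phi> x * (w x \<bullet> e))))"

text \<open>One-dimensional Hausdorff (outer) measure in the plane, normalised so that
  it is the length of segments: H^1(S) = lim_{delta->0} inf sum diam(C_i).\<close>
definition hausdorff1_pre :: "real \<Rightarrow> pt set \<Rightarrow> ennreal" where
  "hausdorff1_pre \<delta> S = (INF C \<in> {C :: nat \<Rightarrow> pt set. S \<subseteq> (\<Union>i. C i) \<and>
       (\<forall>i. bounded (C i) \<and> diameter (C i) \<le> \<delta>)}. (\<Sum>i. ennreal (diameter (C i))))"

definition hausdorff1 :: "pt set \<Rightarrow> ennreal" where
  "hausdorff1 S = (SUP \<delta>\<in>{0<..}. hausdorff1_pre \<delta> S)"

definition H1 :: "pt measure" where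
  "H1 = measure_of UNIV (sets borel) hausdorff1"

text \<open>Trace (in the sense of extension by continuity from smooth functions):
  t is the boundary trace of v (with weak gradient w) on the boundary of A iff there
  are C-infinity functions u_n converging to v in H^1(A) whose boundary restrictions
  converge to t in L^2(boundary of A, H^1).\<close>
definition has_trace :: "pt set \<Rightarrow> (pt \<Rightarrow> real) \<Rightarrow> (pt \<Rightarrow> pt) \<Rightarrow> (pt \<Rightarrow> real) \<Rightarrow> bool" where
  "has_trace A v w t \<longleftrightarrow> t \<in> borel_measurable borel \<and>
     (\<exists>u :: nat \<Rightarrow> pt \<Rightarrow> real. (\<forall>n. smooth2 (u n)) \<and>
        (\<lambda>n. \<integral>\<^sup>+ x\<in>A. ennreal ((u n x - v x)\<^sup>2 + (norm (grad (u n) x - w x))\<^sup>2) \<partial>lborel)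
          \<longlonglongrightarrow> 0 \<and>
        (\<lambda>n. \<integral>\<^sup>+ z\<in>frontier A. ennreal ((u n z - t z)\<^sup>2) \<partial>H1) \<longlonglongrightarrow> 0)"

definition K_const :: "pt set \<Rightarrow> pt set \<Rightarrow> ereal" where
  "K_const G A = Inf {ereal (LINT x:A|lborel. (norm (w x))\<^sup>2) | v w t.
      H1_weak_grad A v w \<and> has_trace A v w t \<and>
      (\<integral>\<^sup>+ z\<in>G. ennreal ((t z)\<^sup>2) \<partial>H1) = 1 \<and>
      (AE z in H1. z \<in> frontier A - G \<longrightarrow> t z = 0)}"

definition Gamma_set :: "(real \<Rightarrow> real) \<Rightarrow> real \<Rightarrow> real \<Rightarrow> pt set" where
  "Gamma_set g a1 a2 = {(x, g x) | x. a1 < x \<and> x < a2}"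

definition R_set :: "(real \<Rightarrow> real) \<Rightarrow> real \<Rightarrow> real \<Rightarrow> real \<Rightarrow> pt set" where
  "R_set g a1 a2 b = {(x, y). a1 < x \<and> x < a2 \<and> g x < y \<and> y < g x + b}"

end

(*
  Let eps = a2 - a1. For a C^1 function u on the strip R above the graph Gamma, the value u(x, g x)
  equals the value at another boundary point minus the integral of the gradient along a path in R:
  straight up to the top y = g x + b when the strip is thin (b < (2L+1) eps), and otherwise up to a
  height y in a window of length eps and then horizontally to the side x = a1. By Cauchy-Schwarz
  each path costs its length times a slice of the Dirichlet energy, so averaging over the window and
  integrating along the graph gives, with constants independent of b,
    ||u||^2_{L^2(Gamma)} <= 6 (1+L) ||u||^2_{L^2(dR - Gamma)} + 6 (1+L)^2 eps ||grad u||^2_{L^2(R)}.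
  Arc length on the boundary pieces is compared with the length of the parameter interval through
  Riemann sums: the graph map is (1+L)-Lipschitz and the coordinate projections are 1-Lipschitz.
  Applied to the smooth approximations defining the trace, a trace with unit norm on Gamma that
  vanishes on the rest of the boundary forces energy at least 1 / (24 (1+L)^2 eps).
*)

theory Submission
  imports Defs
begin

lemma grad_eqI:
  assumes "(f has_derivative (\<lambda>h. D \<bullet> h)) (at x)"
  shows "grad f x = D"
  unfolding grad_def
proof (rule the_equality)
  fix D' assume "(f has_derivative (\<lambda>h. D' \<bullet> h)) (at x)"
  with assms have "D' \<bullet> h = D \<bullet> h" for h
    by (metis has_derivative_unique)
  then show "D' = D" by (metis euclidean_eqI)
qed (rule assms)

lemma smooth2_has_derivative_grad:
  assumes "smooth2 u"
  shows "(u has_derivative (\<lambda>h. grad u x \<bullet> h)) (at x)"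
  using assms by (cases rule: smooth2.cases) (metis grad_eqI)

lemma smooth2_continuous_grad:
  assumes "smooth2 u"
  shows "continuous_on UNIV (grad u)"
proof -
  obtain Df where Df: "\<And>x. (u has_derivative (\<lambda>h. Df x \<bullet> h)) (at x)"
    and smooth: "\<And>e. e \<in> Basis \<Longrightarrow> smooth2 (\<lambda>x. Df x \<bullet> e)"
    using assms by (cases rule: smooth2.cases) blast
  have components: "continuous_on UNIV (\<lambda>x. Df x \<bullet> e)" if "e \<in> Basis" for e
    using smooth2_has_derivative_grad[OF smooth[OF that]]
    by (meson continuous_at_imp_continuous_on has_derivative_continuous)
  have "continuous_on UNIV (\<lambda>x. \<Sum>e\<in>Basis. (Df x \<bullet> e) *\<^sub>R e)"
    by (intro continuous_intros components)
  moreover have "grad u = Df"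
    using grad_eqI[OF Df] by auto
  ultimately show ?thesis
    by (simp add: euclidean_representation)
qed

lemma ennreal_add_le_diff_add:
  fixes y \<eta> :: real
  assumes "0 \<le> \<eta>"
  shows "ennreal (y + \<eta>) \<le> ennreal (y - \<eta>) + ennreal (2 * \<eta>)"
proof (cases "0 \<le> y - \<eta>")
  case True
  then show ?thesis
    using assms by (simp flip: ennreal_plus)
next
  case False
  then have "ennreal (y + \<eta>) \<le> ennreal (2 * \<eta>)"
    by (intro ennreal_leI) simp
  then show ?thesis
    by (simp add: add_increasing)
qed

lemma ennreal_le_of_error_bound:
  fixes x y :: ennreal
  assumes "\<And>\<eta>. 0 < \<eta> \<Longrightarrow> x \<le> y + ennreal (\<eta> * C)" "0 \<le> C"
  shows "x \<le> y"
proof (rule ennreal_le_epsilon)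
  fix e :: real assume "0 < e"
  then have "x \<le> y + ennreal (e / (C + 1) * C)"
    using assms by (intro assms(1)) simp
  also have "e / (C + 1) * C \<le> e"
    using \<open>0 < e\<close> assms(2) by (simp add: field_simps)
  finally show "x \<le> y + ennreal e"
    by (simp add: add_left_mono ennreal_leI order_trans)
qed

lemma ennreal_le_double_add:
  fixes x y z :: real
  assumes "x \<le> 2 * y + 2 * z" "0 \<le> y" "0 \<le> z"
  shows "ennreal x \<le> 2 * ennreal y + 2 * ennreal z"
proof -
  have "ennreal x \<le> ennreal (2 * y + 2 * z)"
    using assms(1) by (rule ennreal_leI)
  also have "\<dots> = 2 * ennreal y + 2 * ennreal z"
    using assms(2,3) by (simp add: ennreal_plus ennreal_mult)
  finally show ?thesis .
qed

lemma ennreal_power2_diff_le: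
  fixes x y :: real
  shows "ennreal ((x - y)\<^sup>2) \<le> 2 * ennreal (x\<^sup>2) + 2 * ennreal (y\<^sup>2)"
proof -
  have "0 \<le> (x + y)\<^sup>2"
    by simp
  then show ?thesis
    by (intro ennreal_le_double_add) (simp_all add: power2_eq_square algebra_simps)
qed

lemma ennreal_power2_add_diff_le:
  fixes x y z :: real
  shows "ennreal ((x + y - z)\<^sup>2) \<le> 3 * ennreal (x\<^sup>2) + 3 * ennreal (y\<^sup>2) + 3 * ennreal (z\<^sup>2)"
proof -
  have "0 \<le> (x - y)\<^sup>2 + (x + z)\<^sup>2 + (y + z)\<^sup>2"
    by simp
  then have "ennreal ((x + y - z)\<^sup>2) \<le> ennreal (3 * x\<^sup>2 + 3 * y\<^sup>2 + 3 * z\<^sup>2)"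
    by (intro ennreal_leI) (simp add: power2_eq_square algebra_simps)
  also have "\<dots> = 3 * ennreal (x\<^sup>2) + 3 * ennreal (y\<^sup>2) + 3 * ennreal (z\<^sup>2)"
    by (simp add: ennreal_mult)
  finally show ?thesis .
qed

lemma power2_fst_le_power2_norm: "(fst z)\<^sup>2 \<le> (norm (z :: pt))\<^sup>2"
  by (cases z) (simp add: norm_Pair)

lemma power2_snd_le_power2_norm: "(snd z)\<^sup>2 \<le> (norm (z :: pt))\<^sup>2"
  by (cases z) (simp add: norm_Pair)

lemma square_diff_le_interval_energy:
  fixes F \<phi> :: "real \<Rightarrow> real"
  assumes F: "\<And>s. (F has_real_derivative \<phi> s) (at s)" and \<phi>: "continuous_on UNIV \<phi>" and "a \<le> b"
  shows "ennreal ((F b - F a)\<^sup>2) \<le> ennreal (b - a) * (\<integral>\<^sup>+s\<in>{a<..<b}. ennreal ((\<phi> s)\<^sup>2) \<partial>lborel)"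
proof -
  have ftc: "(\<phi> has_integral (F b - F a)) {a..b}"
    using \<open>a \<le> b\<close> F by (intro fundamental_theorem_of_calculus)
      (auto simp: has_real_derivative_iff_has_vector_derivative[symmetric]
        intro: has_field_derivative_at_within)
  define I where "I = integral {a..b} (\<lambda>s. \<bar>\<phi> s\<bar>)"
  have abs_int: "((\<lambda>s. \<bar>\<phi> s\<bar>) has_integral I) {a<..<b}"
    unfolding I_def has_integral_Icc_iff_Ioo[symmetric]
    by (intro integrable_integral integrable_continuous_interval continuous_intros
        continuous_on_subset[OF \<phi>]) auto
  have "\<bar>F b - F a\<bar> \<le> I"
    unfolding I_def using integral_norm_bound_integral[OF has_integral_integrable[OF ftc]]
      abs_int[folded has_integral_Icc_iff_Ioo] integral_unique[OF ftc]
    by (metis has_integral_integrable order_refl real_norm_def)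
  then have "ennreal ((F b - F a)\<^sup>2) \<le> (ennreal I)\<^sup>2"
    by (simp add: ennreal_power power2_le_iff_abs_le order_trans[OF abs_ge_zero])
  also have "ennreal I = (\<integral>\<^sup>+s. (ennreal \<bar>\<phi> s\<bar> * indicator {a<..<b} s) * indicator {a<..<b} s \<partial>lborel)"
    by (subst nn_integral_has_integral_lebesgue'[OF _ abs_int, symmetric])
      (auto intro!: nn_integral_cong simp: indicator_def)
  also have "\<dots>\<^sup>2 \<le> (\<integral>\<^sup>+s. (ennreal \<bar>\<phi> s\<bar> * indicator {a<..<b} s)\<^sup>2 \<partial>lborel) *
      (\<integral>\<^sup>+s. (indicator {a<..<b} s)\<^sup>2 \<partial>lborel)"
    using borel_measurable_continuous_onI[OF \<phi>]
    by (intro Cauchy_Schwarz_nn_integral) (measurable, auto intro: borel_measurable_indicator)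
  also have "\<dots> = ennreal (b - a) * (\<integral>\<^sup>+s\<in>{a<..<b}. ennreal ((\<phi> s)\<^sup>2) \<partial>lborel)"
  proof -
    have "(indicator {a<..<b} s :: ennreal)\<^sup>2 = indicator {a<..<b} s" for s
      by (simp add: indicator_def)
    then show ?thesis
      using \<open>a \<le> b\<close> by (simp add: power_mult_distrib ennreal_power mult.commute)
  qed
  finally show ?thesis .
qed

lemma square_diff_le_segment_energy:
  fixes u :: "'a::euclidean_space \<Rightarrow> real"
  assumes u: "\<And>z. (u has_derivative (\<lambda>h. G z \<bullet> h)) (at z)" and G: "continuous_on UNIV G" and "a \<le> b"
  shows "ennreal ((u (P + b *\<^sub>R d) - u (P + a *\<^sub>R d))\<^sup>2)
    \<le> ennreal (b - a) * (\<integral>\<^sup>+s\<in>{a<..<b}. ennreal ((G (P + s *\<^sub>R d) \<bullet> d)\<^sup>2) \<partial>lborel)"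
proof (rule square_diff_le_interval_energy[OF _ _ \<open>a \<le> b\<close>])
  show "continuous_on UNIV (\<lambda>s. G (P + s *\<^sub>R d) \<bullet> d)"
    by (intro continuous_intros continuous_on_compose2[OF G]) auto
  fix s
  have "((\<lambda>s. P + s *\<^sub>R d) has_derivative (\<lambda>h. h *\<^sub>R d)) (at s)"
    by (auto intro!: derivative_eq_intros)
  from has_derivative_compose[OF this u]
  show "((\<lambda>s. u (P + s *\<^sub>R d)) has_real_derivative G (P + s *\<^sub>R d) \<bullet> d) (at s)"
    unfolding has_field_derivative_def by (rule has_derivative_eq_rhs) (simp add: fun_eq_iff)
qed

lemma uniform_cell_subset:
  fixes p h :: real
  assumes "0 \<le> h" "i < m"
  shows "p \<le> p + real i * h" "p + real i * h + h \<le> p + real m * h"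
proof -
  have "(real i + 1) * h \<le> real m * h"
    using assms by (intro mult_right_mono) auto
  then show "p + real i * h + h \<le> p + real m * h"
    by (simp add: algebra_simps)
qed (use assms in simp)

lemma disjoint_family_uniform_cells:
  fixes p h :: real
  assumes "0 < h"
  shows "disjoint_family (\<lambda>i. {p + real i * h <..< p + real i * h + h})"
  unfolding disjoint_family_on_def
proof (intro ballI impI)
  have "{p + real i * h <..< p + real i * h + h} \<inter> {p + real j * h <..< p + real j * h + h} = {}"
    if "i < j" for i j :: nat
  proof -
    have "real i * h + h \<le> real j * h"
      using that assms mult_right_mono[of "real i + 1" "real j" h] by (simp add: algebra_simps)
    then show ?thesis by auto
  qed
  then show "{p + real i * h <..< p + real i * h + h} \<inter> {p + real j * h <..< p + real j * h + h} = {}"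
    if "i \<noteq> j" for i j
    using that by (metis Int_commute linorder_neqE_nat)
qed

lemma Icc_subset_uniform_cells:
  fixes p h :: real
  assumes "0 \<le> h" "0 < m"
  shows "{p..p + real m * h} \<subseteq> (\<Union>i<m. {p + real i * h..p + real i * h + h})"
proof
  fix x assume x: "x \<in> {p..p + real m * h}"
  show "x \<in> (\<Union>i<m. {p + real i * h..p + real i * h + h})"
  proof (cases "h = 0")
    case True
    with x assms(2) show ?thesis by auto
  next
    case False
    then have h: "0 < h" using assms(1) by simp
    define k where "k = nat \<lfloor>(x - p) / h\<rfloor>"
    have "real k = of_int \<lfloor>(x - p) / h\<rfloor>"
      using x h by (simp add: k_def)
    then have "real k \<le> (x - p) / h" "(x - p) / h < real k + 1"
      by linarith+
    then have k: "real k * h \<le> x - p" "x - p < real k * h + h"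
      using h by (simp_all add: field_simps)
    show ?thesis
    proof (cases "k < m")
      case True
      with k show ?thesis by (intro UN_I[of k]) auto
    next
      case False
      then have "real m * h \<le> real k * h"
        using h by (intro mult_right_mono) auto
      then have "x = p + real m * h"
        using x k by (simp only: atLeastAtMost_iff) linarith
      then have "x = p + real (m - 1) * h + h"
        using assms(2) by (simp add: of_nat_diff algebra_simps)
      then show ?thesis
        using assms(2) h by (intro UN_I[of "m - 1"]) auto
    qed
  qed
qed

lemma disjoint_family_on_image_uniform_cells:
  fixes p h :: real
  assumes "0 < h" "inj_on \<gamma> {p..p + real m * h}"
  shows "disjoint_family_on (\<lambda>i. \<gamma> ` {p + real i * h <..< p + real i * h + h}) {..<m}"
  unfolding disjoint_family_on_def
proof (intro ballI impI)
  fix i j assume ij: "i \<in> {..<m}" "j \<in> {..<m}" "i \<noteq> j"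
  have "{p + real k * h <..< p + real k * h + h} \<subseteq> {p..p + real m * h}" if "k < m" for k
  proof -
    have "p \<le> p + real k * h" "p + real k * h + h \<le> p + real m * h"
      using uniform_cell_subset[OF less_imp_le[OF assms(1)] that] by auto
    then show ?thesis
      unfolding subset_iff greaterThanLessThan_iff atLeastAtMost_iff by (meson less_imp_le order_trans)
  qed
  then have "\<gamma> ` {p + real i * h <..< p + real i * h + h} \<inter> \<gamma> ` {p + real j * h <..< p + real j * h + h}
      = \<gamma> ` ({p + real i * h <..< p + real i * h + h} \<inter> {p + real j * h <..< p + real j * h + h})"
    using ij by (intro inj_on_image_Int[OF assms(2), symmetric]) auto
  also have "\<dots> = {}"
    using disjoint_family_uniform_cells[OF assms(1), of p] ij(3) unfolding disjoint_family_on_def by auto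
  finally show "\<gamma> ` {p + real i * h <..< p + real i * h + h} \<inter> \<gamma> ` {p + real j * h <..< p + real j * h + h} = {}" .
qed

lemma uniform_partition_oscillation:
  fixes \<phi> :: "real \<Rightarrow> real"
  assumes "\<alpha> < \<beta>" "continuous_on {\<alpha>..\<beta>} \<phi>" "0 < \<eta>"
  obtains N h where "0 < N" "0 < h" "\<beta> = \<alpha> + real N * h"
    "\<And>k x. k < N \<Longrightarrow> \<alpha> + real k * h \<le> x \<Longrightarrow> x \<le> \<alpha> + real k * h + h \<Longrightarrow>
      \<bar>\<phi> x - \<phi> (\<alpha> + real k * h)\<bar> \<le> \<eta>"
proof -
  obtain d where d: "0 < d"
    "\<And>x x'. x \<in> {\<alpha>..\<beta>} \<Longrightarrow> x' \<in> {\<alpha>..\<beta>} \<Longrightarrow> dist x' x < d \<Longrightarrow> dist (\<phi> x') (\<phi> x) < \<eta>"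
    using compact_uniformly_continuous[OF assms(2) compact_Icc] assms(3)
    unfolding uniformly_continuous_on_def by metis
  obtain N :: nat where N: "(\<beta> - \<alpha>) / d < N"
    using reals_Archimedean2 by blast
  then have "0 < N"
    using assms(1) d(1) by (metis divide_pos_pos diff_gt_0_iff_gt less_trans of_nat_0_less_iff)
  define h where "h = (\<beta> - \<alpha>) / N"
  have h: "0 < h" "\<beta> = \<alpha> + real N * h" "h < d"
    using assms(1) N d(1) \<open>0 < N\<close> by (auto simp: h_def field_simps)
  show ?thesis
  proof (rule that[OF \<open>0 < N\<close> h(1,2)])
    fix k x assume "k < N" "\<alpha> + real k * h \<le> x" "x \<le> \<alpha> + real k * h + h"
    moreover note uniform_cell_subset[OF less_imp_le[OF h(1)] \<open>k < N\<close>, of \<alpha>]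
    moreover have "0 \<le> real k * h" using h(1) by simp
    ultimately have "\<alpha> + real k * h \<in> {\<alpha>..\<beta>}" "x \<in> {\<alpha>..\<beta>}" "dist x (\<alpha> + real k * h) < d"
      using h unfolding atLeastAtMost_iff dist_real_def by linarith+
    then have "dist (\<phi> x) (\<phi> (\<alpha> + real k * h)) < \<eta>"
      by (rule d(2))
    then show "\<bar>\<phi> x - \<phi> (\<alpha> + real k * h)\<bar> \<le> \<eta>"
      by (simp add: dist_real_def)
  qed
qed

section \<open>The one-dimensional Hausdorff measure\<close>

lemma bounded_real_subset_Icc_diameter:
  fixes X :: "real set"
  assumes "bounded X"
  obtains a b where "X \<subseteq> {a..b}" "b - a \<le> diameter X"
proof (cases "X = {}")
  case False
  have bdd: "bdd_above X" "bdd_below X"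
    using assms by (auto intro: bounded_imp_bdd_above bounded_imp_bdd_below)
  have "y \<le> x + diameter X" if "x \<in> X" "y \<in> X" for x y
    using diameter_bounded_bound[OF assms that] by (simp add: dist_real_def abs_le_iff)
  then have "Sup X \<le> x + diameter X" if "x \<in> X" for x
    using False that by (intro cSup_least) auto
  then have "Sup X - diameter X \<le> Inf X"
    using False by (intro cInf_greatest) (auto simp: algebra_simps)
  moreover have "X \<subseteq> {Inf X..Sup X}"
    using bdd by (auto intro: cInf_lower cSup_upper)
  ultimately show ?thesis
    using that by simp
qed (use that in auto)

lemma contraction_image_subset_Icc_diameter:
  fixes pr :: "'a::metric_space \<Rightarrow> real"
  assumes C: "bounded C" and pr: "\<And>z w. \<bar>pr z - pr w\<bar> \<le> dist z w"
  obtains a b where "pr ` C \<subseteq> {a..b}" "b - a \<le> diameter C"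
proof -
  obtain x e where "\<And>y. y \<in> C \<Longrightarrow> dist x y \<le> e"
    using C unfolding bounded_def by blast
  then have "\<And>y. y \<in> C \<Longrightarrow> dist (pr x) (pr y) \<le> e"
    using pr unfolding dist_real_def by (meson order_trans)
  then have "bounded (pr ` C)"
    unfolding bounded_def by blast
  then obtain a b where "pr ` C \<subseteq> {a..b}" "b - a \<le> diameter (pr ` C)"
    by (rule bounded_real_subset_Icc_diameter)
  moreover have "diameter (pr ` C) \<le> diameter C"
    using order_trans[OF pr diameter_bounded_bound[OF C]]
    by (intro diameter_le) (auto simp: dist_real_def diameter_ge_0)
  ultimately show ?thesis
    using that by simp
qed

lemma hausdorff1_pre_le:
  assumes "S \<subseteq> (\<Union>i. C i)" "\<And>i. bounded (C i)" "\<And>i. diameter (C i) \<le> \<delta>"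
  shows "hausdorff1_pre \<delta> S \<le> (\<Sum>i. ennreal (diameter (C i)))"
  unfolding hausdorff1_pre_def using assms by (intro INF_lower) auto

lemma emeasure_lborel_le_hausdorff1:
  fixes pr :: "pt \<Rightarrow> real"
  assumes P: "P \<in> sets lborel" "P \<subseteq> pr ` S"
    and pr: "\<And>z w. \<bar>pr z - pr w\<bar> \<le> dist z w"
  shows "emeasure lborel P \<le> hausdorff1 S"
proof -
  have "emeasure lborel P \<le> (\<Sum>i. ennreal (diameter (C i)))"
    if cover: "S \<subseteq> (\<Union>i. C i)" and bounded: "\<And>i. bounded (C i)" for C
  proof -
    have "\<exists>I. pr ` C i \<subseteq> {fst I..snd I} \<and> snd I - fst I \<le> diameter (C i)" for i
    proof -
      obtain a b where "pr ` C i \<subseteq> {a..b}" "b - a \<le> diameter (C i)"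
        by (rule contraction_image_subset_Icc_diameter[OF bounded pr])
      then show ?thesis
        by (intro exI[of _ "(a, b)"]) simp
    qed
    then obtain I where I: "\<And>i. pr ` C i \<subseteq> {fst (I i)..snd (I i)}"
      "\<And>i. snd (I i) - fst (I i) \<le> diameter (C i)"
      by metis
    have "P \<subseteq> (\<Union>i. {fst (I i)..snd (I i)})"
    proof
      fix x assume "x \<in> P"
      then obtain z i where "x = pr z" "z \<in> C i"
        using P(2) cover by blast
      then show "x \<in> (\<Union>i. {fst (I i)..snd (I i)})"
        using I(1)[of i] by blast
    qed
    then have "emeasure lborel P \<le> emeasure lborel (\<Union>i. {fst (I i)..snd (I i)})"
      by (intro emeasure_mono) auto
    also have "\<dots> \<le> (\<Sum>i. emeasure lborel {fst (I i)..snd (I i)})"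
      by (intro emeasure_subadditive_countably) auto
    also have "\<dots> \<le> (\<Sum>i. ennreal (diameter (C i)))"
    proof (intro suminf_le summableI)
      show "emeasure lborel {fst (I i)..snd (I i)} \<le> ennreal (diameter (C i))" for i
        using I(2)[of i] by (cases "fst (I i) \<le> snd (I i)") (auto intro: ennreal_leI)
    qed
    finally show ?thesis .
  qed
  then have "emeasure lborel P \<le> hausdorff1_pre 1 S"
    unfolding hausdorff1_pre_def by (intro INF_greatest) auto
  also have "\<dots> \<le> hausdorff1 S"
    unfolding hausdorff1_def by (intro SUP_upper) simp
  finally show ?thesis .
qed

lemma diameter_lipschitz_image_le:
  fixes \<gamma> :: "real \<Rightarrow> 'a::real_normed_vector"
  assumes "c-lipschitz_on {s..t} \<gamma>" "s \<le> t"
  shows "diameter (\<gamma> ` {s..t}) \<le> c * (t - s)"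
proof (rule diameter_le)
  fix z w assume "z \<in> \<gamma> ` {s..t}" "w \<in> \<gamma> ` {s..t}"
  then obtain x y where xy: "x \<in> {s..t}" "y \<in> {s..t}" "z = \<gamma> x" "w = \<gamma> y"
    by auto
  have "dist (\<gamma> x) (\<gamma> y) \<le> c * dist x y"
    using lipschitz_onD[OF assms(1) xy(1,2)] .
  also have "\<dots> \<le> c * (t - s)"
    using xy(1,2) lipschitz_on_nonneg[OF assms(1)] by (intro mult_left_mono) (auto simp: dist_real_def)
  finally show "norm (z - w) \<le> c * (t - s)"
    by (simp add: xy dist_norm)
qed (use assms in auto)

lemma hausdorff1_lipschitz_image_le:
  assumes lip: "c-lipschitz_on {p..q} \<gamma>" and "p \<le> q"
  shows "hausdorff1 (\<gamma> ` {p..q}) \<le> ennreal (c * (q - p))"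
  unfolding hausdorff1_def
proof (rule SUP_least)
  fix \<delta> :: real assume "\<delta> \<in> {0<..}"
  have c: "0 \<le> c" using lipschitz_on_nonneg[OF lip] .
  obtain m :: nat where m: "c * (q - p) / \<delta> < m"
    using reals_Archimedean2 by blast
  moreover have "0 \<le> c * (q - p) / \<delta>"
    using c \<open>p \<le> q\<close> \<open>\<delta> \<in> {0<..}\<close> by simp
  ultimately have m_pos: "0 < m"
    by linarith
  define h where "h = (q - p) / m"
  have h: "0 \<le> h" "q = p + real m * h" "c * h \<le> \<delta>"
    using m m_pos \<open>p \<le> q\<close> \<open>\<delta> \<in> {0<..}\<close> by (auto simp: h_def field_simps)
  define C where "C i = (if i < m then \<gamma> ` {p + real i * h .. p + real i * h + h} else {})" for i
  have cell_lip: "c-lipschitz_on {p + real i * h .. p + real i * h + h} \<gamma>" if "i < m" for i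
    using uniform_cell_subset[OF h(1) that, of p] h(2)
    by (intro lipschitz_on_subset[OF lip]) auto
  have diam: "diameter (C i) \<le> c * h" for i
    using diameter_lipschitz_image_le[OF cell_lip] c h(1) by (simp add: C_def)
  have "\<gamma> ` {p..q} \<subseteq> (\<Union>i<m. \<gamma> ` {p + real i * h .. p + real i * h + h})"
    using image_mono[OF Icc_subset_uniform_cells[OF h(1) m_pos, of p], of \<gamma>] h(2)
    by (simp add: image_UN)
  also have "\<dots> \<subseteq> (\<Union>i. C i)"
  proof (intro UN_least)
    fix i assume "i \<in> {..<m}"
    then show "\<gamma> ` {p + real i * h .. p + real i * h + h} \<subseteq> (\<Union>i. C i)"
      using UN_upper[of i UNIV C] by (simp add: C_def)
  qed
  finally have "\<gamma> ` {p..q} \<subseteq> (\<Union>i. C i)" .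
  moreover have "bounded (C i)" for i
    using cell_lip[THEN lipschitz_on_continuous_on]
    by (auto simp: C_def intro!: compact_imp_bounded compact_continuous_image)
  ultimately have "hausdorff1_pre \<delta> (\<gamma> ` {p..q}) \<le> (\<Sum>i. ennreal (diameter (C i)))"
    using order_trans[OF diam h(3)] by (rule hausdorff1_pre_le)
  also have "\<dots> = (\<Sum>i<m. ennreal (diameter (C i)))"
    by (intro suminf_finite) (auto simp: C_def)
  also have "\<dots> \<le> (\<Sum>i<m. ennreal (c * h))"
    by (intro sum_mono ennreal_leI diam)
  also have "\<dots> = ennreal (real m * (c * h))"
    by (simp add: ennreal_of_nat_eq_real_of_nat ennreal_mult')
  also have "real m * (c * h) = c * (q - p)"
    using m_pos by (simp add: h_def)
  finally show "hausdorff1_pre \<delta> (\<gamma> ` {p..q}) \<le> ennreal (c * (q - p))" .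
qed

lemma sets_H1 [measurable_cong]: "sets H1 = sets borel"
  unfolding H1_def by (metis sets.sigma_sets_eq sets_measure_of sets.space_closed space_borel)

lemma borel_measurable_H1: "f \<in> borel_measurable borel \<Longrightarrow> f \<in> borel_measurable H1"
  by (simp add: measurable_cong_sets[OF sets_H1 refl])

text \<open>\<^const>\<open>H1\<close> is built with \<^const>\<open>measure_of\<close>, which yields the zero measure unless
  \<^const>\<open>hausdorff1\<close> is countably additive on the Borel sets. It is, but instead of proving this
  (Caratheodory's criterion for metric outer measures) the final estimate splits on this lemma: in the
  degenerate case every \<^const>\<open>H1\<close>-integral vanishes.\<close>
lemma emeasure_H1_cases:
  "(\<forall>A. emeasure H1 A = 0) \<or> (\<forall>A\<in>sets borel. emeasure H1 A = hausdorff1 A)"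
proof -
  have "sigma_sets UNIV (sets borel) = sets (borel :: pt measure)"
    by (metis sets.sigma_sets_eq space_borel)
  then show ?thesis
    unfolding H1_def emeasure_measure_of_conv by auto
qed

section \<open>Integrals over curves\<close>

lemma nn_integral_sum_indicator:
  fixes c :: "nat \<Rightarrow> ennreal"
  assumes "\<And>k. k < N \<Longrightarrow> A k \<in> sets M"
  shows "(\<integral>\<^sup>+z. (\<Sum>k<N. c k * indicator (A k) z) \<partial>M) = (\<Sum>k<N. c k * emeasure M (A k))"
proof -
  have "(\<integral>\<^sup>+z. (\<Sum>k<N. c k * indicator (A k) z) \<partial>M) = (\<Sum>k<N. \<integral>\<^sup>+z. c k * indicator (A k) z \<partial>M)"
    using assms by (intro nn_integral_sum) auto
  also have "\<dots> = (\<Sum>k<N. c k * emeasure M (A k))"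
    using assms by (intro sum.cong refl nn_integral_cmult_indicator) auto
  finally show ?thesis .
qed

lemma nn_integral_indicator_le_sum:
  fixes c :: "nat \<Rightarrow> ennreal"
  assumes "\<And>k. k < N \<Longrightarrow> A k \<in> sets M" "S \<subseteq> (\<Union>k<N. A k)"
    and "\<And>k z. k < N \<Longrightarrow> z \<in> A k \<Longrightarrow> z \<in> S \<Longrightarrow> f z \<le> c k"
  shows "(\<integral>\<^sup>+z. f z * indicator S z \<partial>M) \<le> (\<Sum>k<N. c k * emeasure M (A k))"
proof -
  have "f z * indicator S z \<le> (\<Sum>k<N. c k * indicator (A k) z)" for z
  proof (cases "z \<in> S")
    case True
    then obtain k where k: "k < N" "z \<in> A k"
      using assms(2) by blast
    then have "f z * indicator S z \<le> c k * indicator (A k) z"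
      using True assms(3) by simp
    also have "\<dots> \<le> (\<Sum>k<N. c k * indicator (A k) z)"
      using k by (intro member_le_sum) auto
    finally show ?thesis .
  qed simp
  then have "(\<integral>\<^sup>+z. f z * indicator S z \<partial>M) \<le> (\<integral>\<^sup>+z. (\<Sum>k<N. c k * indicator (A k) z) \<partial>M)"
    by (intro nn_integral_mono)
  also have "\<dots> = (\<Sum>k<N. c k * emeasure M (A k))"
    using assms(1) by (rule nn_integral_sum_indicator)
  finally show ?thesis .
qed

lemma sum_le_nn_integral_indicator:
  fixes c :: "nat \<Rightarrow> ennreal"
  assumes "\<And>k. k < N \<Longrightarrow> A k \<in> sets M" "disjoint_family_on A {..<N}" "\<And>k. k < N \<Longrightarrow> A k \<subseteq> S"
    and "\<And>k z. k < N \<Longrightarrow> z \<in> A k \<Longrightarrow> c k \<le> f z"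
  shows "(\<Sum>k<N. c k * emeasure M (A k)) \<le> (\<integral>\<^sup>+z. f z * indicator S z \<partial>M)"
proof -
  have "(\<Sum>k<N. c k * indicator (A k) z) \<le> f z * indicator S z" for z
  proof (cases "\<exists>j<N. z \<in> A j")
    case True
    then obtain j where j: "j < N" "z \<in> A j" by blast
    have "(\<Sum>k\<in>{..<N} - {j}. c k * indicator (A k) z) = 0"
      using j assms(2) by (intro sum.neutral) (auto simp: disjoint_family_on_def indicator_def)
    then have "(\<Sum>k<N. c k * indicator (A k) z) = c j * indicator (A j) z"
      using j sum.remove[of "{..<N}" j "\<lambda>k. c k * indicator (A k) z"]
      by (metis add.right_neutral finite_lessThan lessThan_iff)
    then show ?thesis
      using j assms(3,4) by (auto simp: indicator_def)
  qed auto
  then have "(\<integral>\<^sup>+z. (\<Sum>k<N. c k * indicator (A k) z) \<partial>M) \<le> (\<integral>\<^sup>+z. f z * indicator S z \<partial>M)"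
    by (intro nn_integral_mono)
  moreover have "(\<integral>\<^sup>+z. (\<Sum>k<N. c k * indicator (A k) z) \<partial>M) = (\<Sum>k<N. c k * emeasure M (A k))"
    using assms(1) by (rule nn_integral_sum_indicator)
  ultimately show ?thesis by simp
qed

lemma nn_integral_le_by_cells:
  fixes f :: "'a \<Rightarrow> real" and g :: "'b \<Rightarrow> real" and y :: "nat \<Rightarrow> real" and N :: nat and c h \<eta> :: real
  assumes A: "\<And>k. k < N \<Longrightarrow> A k \<in> sets M" "S \<subseteq> (\<Union>k<N. A k)"
    and B: "\<And>k. k < N \<Longrightarrow> B k \<in> sets M'" "disjoint_family_on B {..<N}" "\<And>k. k < N \<Longrightarrow> B k \<subseteq> T"
    and f: "\<And>k z. k < N \<Longrightarrow> z \<in> A k \<Longrightarrow> z \<in> S \<Longrightarrow> f z \<le> y k + \<eta>"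
    and g: "\<And>k x. k < N \<Longrightarrow> x \<in> B k \<Longrightarrow> y k - \<eta> \<le> g x"
    and AB: "\<And>k. k < N \<Longrightarrow> emeasure M (A k) \<le> ennreal (c * h)"
      "\<And>k. k < N \<Longrightarrow> ennreal h \<le> emeasure M' (B k)"
    and nonneg: "0 \<le> c" "0 \<le> h" "0 \<le> \<eta>"
  shows "(\<integral>\<^sup>+z. ennreal (f z) * indicator S z \<partial>M)
    \<le> ennreal c * (\<integral>\<^sup>+x. ennreal (g x) * indicator T x \<partial>M') + ennreal (2 * c * \<eta> * (real N * h))"
proof -
  have "(\<integral>\<^sup>+z. ennreal (f z) * indicator S z \<partial>M) \<le> (\<Sum>k<N. ennreal (y k + \<eta>) * emeasure M (A k))"
    using A f by (intro nn_integral_indicator_le_sum ennreal_leI) auto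
  also have "\<dots> \<le> (\<Sum>k<N. (ennreal (y k - \<eta>) + ennreal (2 * \<eta>)) * ennreal (c * h))"
    using AB(1) nonneg(3) by (intro sum_mono mult_mono ennreal_add_le_diff_add) auto
  also have "\<dots> = ennreal c * (\<Sum>k<N. ennreal (y k - \<eta>) * ennreal h) + ennreal (2 * c * \<eta> * (real N * h))"
  proof -
    have "(\<Sum>k<N. (ennreal (y k - \<eta>) + ennreal (2 * \<eta>)) * ennreal (c * h))
        = (\<Sum>k<N. ennreal (y k - \<eta>) * ennreal (c * h)) + of_nat N * (ennreal (2 * \<eta>) * ennreal (c * h))"
      by (simp only: distrib_right sum.distrib sum_constant card_lessThan)
    also have "(\<Sum>k<N. ennreal (y k - \<eta>) * ennreal (c * h)) = ennreal c * (\<Sum>k<N. ennreal (y k - \<eta>) * ennreal h)"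
      using nonneg by (simp add: ennreal_mult sum_distrib_left mult.left_commute)
    also have "of_nat N * (ennreal (2 * \<eta>) * ennreal (c * h)) = ennreal (2 * c * \<eta> * (real N * h))"
      using nonneg by (simp add: ennreal_of_nat_eq_real_of_nat mult_ac flip: ennreal_mult)
    finally show ?thesis .
  qed
  also have "(\<Sum>k<N. ennreal (y k - \<eta>) * ennreal h) \<le> (\<Sum>k<N. ennreal (y k - \<eta>) * emeasure M' (B k))"
    using AB(2) by (intro sum_mono mult_left_mono) auto
  also have "\<dots> \<le> (\<integral>\<^sup>+x. ennreal (g x) * indicator T x \<partial>M')"
    using B g by (intro sum_le_nn_integral_indicator ennreal_leI) auto
  finally show ?thesis
    by (simp add: mult_left_mono add_right_mono)
qed

lemma borel_image_Ioo:
  fixes \<gamma> :: "real \<Rightarrow> 'a::metric_space"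
  assumes "continuous_on {\<alpha>..\<beta>} \<gamma>" "inj_on \<gamma> {\<alpha>..\<beta>}" "\<alpha> \<le> p" "q \<le> \<beta>"
  shows "\<gamma> ` {p<..<q} \<in> sets borel"
proof -
  have "{p<..<q} = {p..q} - {p, q}"
    by auto
  moreover have "{p..q} - {p, q} \<subseteq> {\<alpha>..\<beta>}" "{p, q} \<subseteq> {\<alpha>..\<beta>}" if "p \<le> q"
    using that assms(3,4) by auto
  ultimately have "\<gamma> ` {p<..<q} = \<gamma> ` {p..q} - {\<gamma> p, \<gamma> q}" if "p \<le> q"
    using that by (simp only: inj_on_image_set_diff[OF assms(2)] image_insert image_empty)
  moreover have "\<gamma> ` {p..q} \<in> sets borel"
    using assms(1,3,4) by (intro borel_closed compact_imp_closed compact_continuous_image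
        continuous_on_subset[OF assms(1)]) auto
  ultimately show ?thesis
    by (cases "p \<le> q") auto
qed

lemma nn_integral_curve_image_le:
  fixes \<gamma> :: "real \<Rightarrow> 'a::metric_space" and f :: "'a \<Rightarrow> real"
  assumes M: "sets M = sets borel" and "\<alpha> < \<beta>" and \<gamma>: "continuous_on {\<alpha>..\<beta>} \<gamma>"
    and f: "continuous_on {\<alpha>..\<beta>} (\<lambda>x. f (\<gamma> x))" and "0 \<le> c"
    and length: "\<And>p q. \<alpha> \<le> p \<Longrightarrow> p \<le> q \<Longrightarrow> q \<le> \<beta> \<Longrightarrow> emeasure M (\<gamma> ` {p..q}) \<le> ennreal (c * (q - p))"
  shows "(\<integral>\<^sup>+z. ennreal (f z) * indicator (\<gamma> ` {\<alpha>..\<beta>}) z \<partial>M)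
    \<le> ennreal c * (\<integral>\<^sup>+x. ennreal (f (\<gamma> x)) * indicator {\<alpha>..\<beta>} x \<partial>lborel)"
proof (rule ennreal_le_of_error_bound)
  fix \<eta> :: real assume "0 < \<eta>"
  then obtain N h where N: "0 < N" "0 < h" "\<beta> = \<alpha> + real N * h"
    and osc: "\<And>k x. k < N \<Longrightarrow> \<alpha> + real k * h \<le> x \<Longrightarrow> x \<le> \<alpha> + real k * h + h \<Longrightarrow>
      \<bar>f (\<gamma> x) - f (\<gamma> (\<alpha> + real k * h))\<bar> \<le> \<eta>"
    using uniform_partition_oscillation[OF \<open>\<alpha> < \<beta>\<close> f] by metis
  define s where "s k = \<alpha> + real k * h" for k
  have cell: "\<alpha> \<le> s k" "s k + h \<le> \<beta>" if "k < N" for k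
    using uniform_cell_subset[OF less_imp_le[OF N(2)] that, of \<alpha>] N(3) by (simp_all add: s_def)
  have "(\<integral>\<^sup>+z. ennreal (f z) * indicator (\<gamma> ` {\<alpha>..\<beta>}) z \<partial>M)
    \<le> ennreal c * (\<integral>\<^sup>+x. ennreal (f (\<gamma> x)) * indicator {\<alpha>..\<beta>} x \<partial>lborel) + ennreal (2 * c * \<eta> * (real N * h))"
  proof (rule nn_integral_le_by_cells[where A = "\<lambda>k. \<gamma> ` {s k..s k + h}" and B = "\<lambda>k. {s k<..<s k + h}"
        and y = "\<lambda>k. f (\<gamma> (s k))"])
    show "\<gamma> ` {s k..s k + h} \<in> sets M" if "k < N" for k
      unfolding M using cell[OF that]
      by (intro borel_closed compact_imp_closed compact_continuous_image continuous_on_subset[OF \<gamma>]) auto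
    show "\<gamma> ` {\<alpha>..\<beta>} \<subseteq> (\<Union>k<N. \<gamma> ` {s k..s k + h})"
      using image_mono[OF Icc_subset_uniform_cells[OF less_imp_le[OF N(2)] N(1), of \<alpha>], of \<gamma>] N(3)
      by (simp add: s_def image_UN)
    show "disjoint_family_on (\<lambda>k. {s k<..<s k + h}) {..<N}"
      unfolding s_def by (rule disjoint_family_on_mono[OF subset_UNIV disjoint_family_uniform_cells[OF N(2)]])
    show "{s k<..<s k + h} \<subseteq> {\<alpha>..\<beta>}" if "k < N" for k
      using cell[OF that] by auto
    show "f z \<le> f (\<gamma> (s k)) + \<eta>" if k: "k < N" and z: "z \<in> \<gamma> ` {s k..s k + h}" for k z
    proof -
      obtain x where "x \<in> {s k..s k + h}" "z = \<gamma> x"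
        using z by blast
      then show ?thesis
        using osc[OF k, of x] by (auto simp: s_def abs_le_iff)
    qed
    show "f (\<gamma> (s k)) - \<eta> \<le> f (\<gamma> x)" if "k < N" "x \<in> {s k<..<s k + h}" for k x
      using that osc[of k x] by (auto simp: s_def abs_le_iff)
    show "emeasure M (\<gamma> ` {s k..s k + h}) \<le> ennreal (c * h)" if "k < N" for k
      using length[of "s k" "s k + h"] cell[OF that] N(2) by simp
  qed (use N(2) \<open>0 \<le> c\<close> \<open>0 < \<eta>\<close> in auto)
  also have "real N * h = \<beta> - \<alpha>"
    using N(3) by simp
  finally show "(\<integral>\<^sup>+z. ennreal (f z) * indicator (\<gamma> ` {\<alpha>..\<beta>}) z \<partial>M)
    \<le> ennreal c * (\<integral>\<^sup>+x. ennreal (f (\<gamma> x)) * indicator {\<alpha>..\<beta>} x \<partial>lborel) + ennreal (\<eta> * (2 * c * (\<beta> - \<alpha>)))"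
    by (simp add: mult_ac)
qed (use \<open>\<alpha> < \<beta>\<close> \<open>0 \<le> c\<close> in simp)

lemma nn_integral_le_curve_image:
  fixes \<gamma> :: "real \<Rightarrow> 'a::metric_space" and f :: "'a \<Rightarrow> real"
  assumes M: "sets M = sets borel" and "\<alpha> < \<beta>" and \<gamma>: "continuous_on {\<alpha>..\<beta>} \<gamma>" "inj_on \<gamma> {\<alpha>..\<beta>}"
    and f: "continuous_on {\<alpha>..\<beta>} (\<lambda>x. f (\<gamma> x))"
    and length: "\<And>p q. \<alpha> \<le> p \<Longrightarrow> p < q \<Longrightarrow> q \<le> \<beta> \<Longrightarrow> ennreal (q - p) \<le> emeasure M (\<gamma> ` {p<..<q})"
  shows "(\<integral>\<^sup>+x. ennreal (f (\<gamma> x)) * indicator {\<alpha><..<\<beta>} x \<partial>lborel)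
    \<le> (\<integral>\<^sup>+z. ennreal (f z) * indicator (\<gamma> ` {\<alpha><..<\<beta>}) z \<partial>M)"
proof (rule ennreal_le_of_error_bound)
  fix \<eta> :: real assume "0 < \<eta>"
  then obtain N h where N: "0 < N" "0 < h" "\<beta> = \<alpha> + real N * h"
    and osc: "\<And>k x. k < N \<Longrightarrow> \<alpha> + real k * h \<le> x \<Longrightarrow> x \<le> \<alpha> + real k * h + h \<Longrightarrow>
      \<bar>f (\<gamma> x) - f (\<gamma> (\<alpha> + real k * h))\<bar> \<le> \<eta>"
    using uniform_partition_oscillation[OF \<open>\<alpha> < \<beta>\<close> f] by metis
  define s where "s k = \<alpha> + real k * h" for k
  have cell: "\<alpha> \<le> s k" "s k + h \<le> \<beta>" if "k < N" for k
    using uniform_cell_subset[OF less_imp_le[OF N(2)] that, of \<alpha>] N(3) by (simp_all add: s_def)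
  have "(\<integral>\<^sup>+x. ennreal (f (\<gamma> x)) * indicator {\<alpha><..<\<beta>} x \<partial>lborel)
    \<le> ennreal 1 * (\<integral>\<^sup>+z. ennreal (f z) * indicator (\<gamma> ` {\<alpha><..<\<beta>}) z \<partial>M) + ennreal (2 * 1 * \<eta> * (real N * h))"
  proof (rule nn_integral_le_by_cells[where A = "\<lambda>k. {s k..s k + h}" and B = "\<lambda>k. \<gamma> ` {s k<..<s k + h}"
        and y = "\<lambda>k. f (\<gamma> (s k))"])
    show "\<gamma> ` {s k<..<s k + h} \<in> sets M" if "k < N" for k
      unfolding M using cell[OF that] by (intro borel_image_Ioo[OF \<gamma>])
    show "{\<alpha><..<\<beta>} \<subseteq> (\<Union>k<N. {s k..s k + h})"
      using Icc_subset_uniform_cells[OF less_imp_le[OF N(2)] N(1), of \<alpha>] N(3)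
      by (auto simp: s_def)
    show "disjoint_family_on (\<lambda>k. \<gamma> ` {s k<..<s k + h}) {..<N}"
      using disjoint_family_on_image_uniform_cells[OF N(2), of \<gamma> \<alpha>] \<gamma>(2) N(3) by (simp add: s_def)
    show "\<gamma> ` {s k<..<s k + h} \<subseteq> \<gamma> ` {\<alpha><..<\<beta>}" if "k < N" for k
      using cell[OF that] by (intro image_mono) auto
    show "f (\<gamma> x) \<le> f (\<gamma> (s k)) + \<eta>" if "k < N" "x \<in> {s k..s k + h}" for k x
      using that osc[of k x] by (auto simp: s_def abs_le_iff)
    show "f (\<gamma> (s k)) - \<eta> \<le> f z" if k: "k < N" and z: "z \<in> \<gamma> ` {s k<..<s k + h}" for k z
    proof -
      obtain x where "x \<in> {s k<..<s k + h}" "z = \<gamma> x"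
        using z by blast
      then show ?thesis
        using osc[OF k, of x] by (auto simp: s_def abs_le_iff)
    qed
    show "ennreal h \<le> emeasure M (\<gamma> ` {s k<..<s k + h})" if "k < N" for k
      using length[of "s k" "s k + h"] cell[OF that] N(2) by simp
  qed (use N(2) \<open>0 < \<eta>\<close> in auto)
  also have "real N * h = \<beta> - \<alpha>"
    using N(3) by simp
  finally show "(\<integral>\<^sup>+x. ennreal (f (\<gamma> x)) * indicator {\<alpha><..<\<beta>} x \<partial>lborel)
    \<le> (\<integral>\<^sup>+z. ennreal (f z) * indicator (\<gamma> ` {\<alpha><..<\<beta>}) z \<partial>M) + ennreal (\<eta> * (2 * (\<beta> - \<alpha>)))"
    by (simp add: mult_ac)
qed (use \<open>\<alpha> < \<beta>\<close> in simp)

lemma nn_integral_H1_curve_le: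
  fixes \<gamma> :: "real \<Rightarrow> pt"
  assumes H: "\<And>A. A \<in> sets borel \<Longrightarrow> emeasure H1 A = hausdorff1 A"
    and "\<alpha> < \<beta>" and lip: "c-lipschitz_on {\<alpha>..\<beta>} \<gamma>" and f: "continuous_on {\<alpha>..\<beta>} (\<lambda>x. f (\<gamma> x))"
  shows "(\<integral>\<^sup>+z\<in>\<gamma> ` {\<alpha>..\<beta>}. ennreal (f z) \<partial>H1) \<le> ennreal c * (\<integral>\<^sup>+x\<in>{\<alpha>..\<beta>}. ennreal (f (\<gamma> x)) \<partial>lborel)"
proof (rule nn_integral_curve_image_le[OF sets_H1 \<open>\<alpha> < \<beta>\<close> lipschitz_on_continuous_on[OF lip] f
      lipschitz_on_nonneg[OF lip]])
  fix p q assume pq: "\<alpha> \<le> p" "p \<le> q" "q \<le> \<beta>"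
  then have lip_pq: "c-lipschitz_on {p..q} \<gamma>"
    by (intro lipschitz_on_subset[OF lip]) auto
  have "compact (\<gamma> ` {p..q})"
    by (intro compact_continuous_image lipschitz_on_continuous_on[OF lip_pq] compact_Icc)
  then have "emeasure H1 (\<gamma> ` {p..q}) = hausdorff1 (\<gamma> ` {p..q})"
    by (intro H borel_closed compact_imp_closed)
  also have "\<dots> \<le> ennreal (c * (q - p))"
    using hausdorff1_lipschitz_image_le[OF lip_pq \<open>p \<le> q\<close>] .
  finally show "emeasure H1 (\<gamma> ` {p..q}) \<le> ennreal (c * (q - p))" .
qed

lemma nn_integral_le_H1_curve:
  fixes \<gamma> :: "real \<Rightarrow> pt" and pr :: "pt \<Rightarrow> real"
  assumes H: "\<And>A. A \<in> sets borel \<Longrightarrow> emeasure H1 A = hausdorff1 A"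
    and "\<alpha> < \<beta>" and \<gamma>: "continuous_on {\<alpha>..\<beta>} \<gamma>" and f: "continuous_on {\<alpha>..\<beta>} (\<lambda>x. f (\<gamma> x))"
    and pr: "\<And>z w. \<bar>pr z - pr w\<bar> \<le> dist z w" "\<And>x. x \<in> {\<alpha>..\<beta>} \<Longrightarrow> pr (\<gamma> x) = x"
  shows "(\<integral>\<^sup>+x\<in>{\<alpha><..<\<beta>}. ennreal (f (\<gamma> x)) \<partial>lborel) \<le> (\<integral>\<^sup>+z\<in>\<gamma> ` {\<alpha><..<\<beta>}. ennreal (f z) \<partial>H1)"
proof (rule nn_integral_le_curve_image[OF sets_H1 \<open>\<alpha> < \<beta>\<close> \<gamma> _ f])
  show inj: "inj_on \<gamma> {\<alpha>..\<beta>}"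
    using pr(2) by (metis inj_onI)
  fix p q assume pq: "\<alpha> \<le> p" "p < q" "q \<le> \<beta>"
  have "{p<..<q} \<subseteq> pr ` \<gamma> ` {p<..<q}"
  proof
    fix x assume "x \<in> {p<..<q}"
    then have "pr (\<gamma> x) = x" "\<gamma> x \<in> \<gamma> ` {p<..<q}"
      using pq pr(2) by auto
    then show "x \<in> pr ` \<gamma> ` {p<..<q}"
      by (metis image_eqI)
  qed
  then have "ennreal (q - p) \<le> hausdorff1 (\<gamma> ` {p<..<q})"
    using emeasure_lborel_le_hausdorff1[OF _ _ pr(1), of "{p<..<q}"] pq by simp
  also have "\<dots> = emeasure H1 (\<gamma> ` {p<..<q})"
    using pq by (intro H[symmetric] borel_image_Ioo[OF \<gamma> inj]) auto
  finally show "ennreal (q - p) \<le> emeasure H1 (\<gamma> ` {p<..<q})" .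
qed

definition dirichlet_energy :: "pt set \<Rightarrow> (pt \<Rightarrow> pt) \<Rightarrow> ennreal" where
  "dirichlet_energy A G = (\<integral>\<^sup>+z\<in>A. ennreal ((norm (G z))\<^sup>2) \<partial>lborel)"

lemma dirichlet_energy_altdef:
  "dirichlet_energy A G = (\<integral>\<^sup>+z. ennreal ((norm (indicator A z *\<^sub>R G z))\<^sup>2) \<partial>lborel)"
  unfolding dirichlet_energy_def by (intro nn_integral_cong) (simp add: indicator_def)

lemma dirichlet_energy_add_le:
  assumes "(\<lambda>z. indicator A z *\<^sub>R F z) \<in> borel_measurable borel" "(\<lambda>z. indicator A z *\<^sub>R G z) \<in> borel_measurable borel"
  shows "dirichlet_energy A (\<lambda>z. F z + G z) \<le> 2 * dirichlet_energy A F + 2 * dirichlet_energy A G"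
proof -
  have "(norm (indicator A z *\<^sub>R (F z + G z)))\<^sup>2
      \<le> 2 * (norm (indicator A z *\<^sub>R F z))\<^sup>2 + 2 * (norm (indicator A z *\<^sub>R G z))\<^sup>2" for z
  proof -
    have "norm (indicator A z *\<^sub>R (F z + G z)) \<le> norm (indicator A z *\<^sub>R F z) + norm (indicator A z *\<^sub>R G z)"
      unfolding scaleR_add_right by (rule norm_triangle_ineq)
    then have "(norm (indicator A z *\<^sub>R (F z + G z)))\<^sup>2 \<le> (norm (indicator A z *\<^sub>R F z) + norm (indicator A z *\<^sub>R G z))\<^sup>2"
      by (simp add: power_mono)
    also have "\<dots> \<le> 2 * (norm (indicator A z *\<^sub>R F z))\<^sup>2 + 2 * (norm (indicator A z *\<^sub>R G z))\<^sup>2"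
      using sum_squares_ge_zero[of "norm (indicator A z *\<^sub>R F z) - norm (indicator A z *\<^sub>R G z)" 0]
      by (simp add: power2_eq_square algebra_simps)
    finally show ?thesis .
  qed
  then have "dirichlet_energy A (\<lambda>z. F z + G z)
      \<le> (\<integral>\<^sup>+z. 2 * ennreal ((norm (indicator A z *\<^sub>R F z))\<^sup>2) + 2 * ennreal ((norm (indicator A z *\<^sub>R G z))\<^sup>2) \<partial>lborel)"
    unfolding dirichlet_energy_altdef by (intro nn_integral_mono ennreal_le_double_add) simp_all
  also have "\<dots> = 2 * dirichlet_energy A F + 2 * dirichlet_energy A G"
  proof -
    have measurable: "(\<lambda>z. ennreal ((norm (indicator A z *\<^sub>R F z))\<^sup>2)) \<in> borel_measurable lborel"
        "(\<lambda>z. ennreal ((norm (indicator A z *\<^sub>R G z))\<^sup>2)) \<in> borel_measurable lborel"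
      using assms unfolding measurable_lborel1 by measurable
    show ?thesis
      using measurable unfolding dirichlet_energy_altdef by (simp add: nn_integral_add nn_integral_cmult)
  qed
  finally show ?thesis .
qed

lemma set_nn_integral_power2_diff_le:
  fixes f g :: "'a \<Rightarrow> real"
  assumes [measurable]: "f \<in> borel_measurable M" "g \<in> borel_measurable M" "A \<in> sets M"
  shows "(\<integral>\<^sup>+z\<in>A. ennreal ((f z - g z)\<^sup>2) \<partial>M)
    \<le> 2 * (\<integral>\<^sup>+z\<in>A. ennreal ((f z)\<^sup>2) \<partial>M) + 2 * (\<integral>\<^sup>+z\<in>A. ennreal ((g z)\<^sup>2) \<partial>M)"
proof -
  have "(\<integral>\<^sup>+z\<in>A. ennreal ((f z - g z)\<^sup>2) \<partial>M)
      \<le> (\<integral>\<^sup>+z. 2 * (ennreal ((f z)\<^sup>2) * indicator A z) + 2 * (ennreal ((g z)\<^sup>2) * indicator A z) \<partial>M)"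
    using ennreal_power2_diff_le by (intro nn_integral_mono) (auto simp: indicator_def)
  also have "\<dots> = 2 * (\<integral>\<^sup>+z\<in>A. ennreal ((f z)\<^sup>2) \<partial>M) + 2 * (\<integral>\<^sup>+z\<in>A. ennreal ((g z)\<^sup>2) \<partial>M)"
    by (simp add: nn_integral_add nn_integral_cmult)
  finally show ?thesis .
qed

lemma H1_weak_grad_measurable:
  assumes "H1_weak_grad A v w"
  shows "(\<lambda>z. indicator A z *\<^sub>R w z) \<in> borel_measurable borel"
proof -
  have "(\<lambda>z. indicator A z *\<^sub>R (w z \<bullet> e)) \<in> borel_measurable borel" if "e \<in> Basis" for e
    using assms that unfolding H1_weak_grad_def L2_on_def set_borel_measurable_def by simp
  then show ?thesis
    by (subst borel_measurable_euclidean_space) simp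
qed

lemma H1_weak_grad_dirichlet_energy:
  assumes "H1_weak_grad A v w"
  shows "dirichlet_energy A w = ennreal (LINT z:A|lborel. (norm (w z))\<^sup>2)"
proof -
  have norm: "(norm x)\<^sup>2 = (\<Sum>e\<in>Basis. (x \<bullet> e)\<^sup>2)" for x :: pt
    unfolding power2_norm_eq_inner by (subst euclidean_inner) (simp add: power2_eq_square)
  have "integrable lborel (\<lambda>z. indicator A z * (w z \<bullet> e)\<^sup>2)" if "e \<in> Basis" for e
    using assms that unfolding H1_weak_grad_def L2_on_def set_integrable_def by simp
  then have "integrable lborel (\<lambda>z. \<Sum>e\<in>Basis. indicator A z * (w z \<bullet> e)\<^sup>2)"
    by (intro Bochner_Integration.integrable_sum) simp
  then have "integrable lborel (\<lambda>z. indicator A z * (norm (w z))\<^sup>2)"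
    by (simp add: norm sum_distrib_left)
  then show ?thesis
    unfolding dirichlet_energy_def set_lebesgue_integral_def
    by (subst nn_integral_eq_integral[symmetric]) (auto intro!: nn_integral_cong simp: indicator_def)
qed

definition vertical_slice_energy :: "pt set \<Rightarrow> (pt \<Rightarrow> pt) \<Rightarrow> real \<Rightarrow> ennreal" where
  "vertical_slice_energy A G x = (\<integral>\<^sup>+y. ennreal ((norm (G (x, y)))\<^sup>2) * indicator A (x, y) \<partial>lborel)"

definition horizontal_slice_energy :: "pt set \<Rightarrow> (pt \<Rightarrow> pt) \<Rightarrow> real \<Rightarrow> ennreal" where
  "horizontal_slice_energy A G y = (\<integral>\<^sup>+x. ennreal ((norm (G (x, y)))\<^sup>2) * indicator A (x, y) \<partial>lborel)"

lemma measurable_energy_density: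
  assumes "A \<in> sets borel" "G \<in> borel_measurable borel"
  shows "(\<lambda>z. ennreal ((norm (G z))\<^sup>2) * indicator A z) \<in> borel_measurable (lborel \<Otimes>\<^sub>M lborel)"
  using assms by (simp add: lborel_prod)

lemma dirichlet_energy_vertical_slices:
  assumes "A \<in> sets borel" "G \<in> borel_measurable borel"
  shows "(\<integral>\<^sup>+x. vertical_slice_energy A G x \<partial>lborel) = dirichlet_energy A G"
    and "vertical_slice_energy A G \<in> borel_measurable borel"
  using lborel.nn_integral_fst[OF measurable_energy_density[OF assms]]
    lborel.borel_measurable_nn_integral_fst[OF measurable_energy_density[OF assms]]
  by (simp_all add: lborel_prod vertical_slice_energy_def[abs_def] dirichlet_energy_def)

lemma dirichlet_energy_horizontal_slices:
  assumes "A \<in> sets borel" "G \<in> borel_measurable borel"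
  shows "(\<integral>\<^sup>+y. horizontal_slice_energy A G y \<partial>lborel) = dirichlet_energy A G"
    and "horizontal_slice_energy A G \<in> borel_measurable borel"
proof -
  have "pair_sigma_finite lborel lborel"
    by (simp add: lborel.sigma_finite_measure_axioms pair_sigma_finite.intro)
  from pair_sigma_finite.nn_integral_snd[OF this measurable_energy_density[OF assms]]
  show "(\<integral>\<^sup>+y. horizontal_slice_energy A G y \<partial>lborel) = dirichlet_energy A G"
    by (simp add: lborel_prod horizontal_slice_energy_def dirichlet_energy_def)
  from lborel.borel_measurable_nn_integral_fst[OF measurable_pair_swap[OF measurable_energy_density[OF assms]]]
  show "horizontal_slice_energy A G \<in> borel_measurable borel"
    by (simp add: horizontal_slice_energy_def[abs_def] lborel_prod)
qed

lemma square_diff_le_vertical_slice_energy: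
  fixes u :: "pt \<Rightarrow> real"
  assumes "\<And>z. (u has_derivative (\<lambda>h. G z \<bullet> h)) (at z)" "continuous_on UNIV G"
    and "a \<le> b" "\<And>r. r \<in> {a<..<b} \<Longrightarrow> (x, r) \<in> A"
  shows "ennreal ((u (x, b) - u (x, a))\<^sup>2)
    \<le> ennreal (b - a) * vertical_slice_energy A G x"
proof -
  have "ennreal ((u (x, b) - u (x, a))\<^sup>2)
      \<le> ennreal (b - a) * (\<integral>\<^sup>+r. ennreal ((snd (G (x, r)))\<^sup>2) * indicator {a<..<b} r \<partial>lborel)"
    using square_diff_le_segment_energy[OF assms(1-3), of "(x, 0)" "(0, 1)"]
    by (simp add: inner_Pair_0)
  also have "\<dots> \<le> ennreal (b - a) * (\<integral>\<^sup>+r. ennreal ((norm (G (x, r)))\<^sup>2) * indicator A (x, r) \<partial>lborel)"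
    using assms(4) power2_snd_le_power2_norm
    by (intro mult_left_mono nn_integral_mono) (auto simp: indicator_def intro!: ennreal_leI)
  finally show ?thesis
    unfolding vertical_slice_energy_def .
qed

lemma square_diff_le_horizontal_slice_energy:
  fixes u :: "pt \<Rightarrow> real"
  assumes "\<And>z. (u has_derivative (\<lambda>h. G z \<bullet> h)) (at z)" "continuous_on UNIV G"
    and "a \<le> b" "\<And>s. s \<in> {a<..<b} \<Longrightarrow> (s, y) \<in> A"
  shows "ennreal ((u (b, y) - u (a, y))\<^sup>2)
    \<le> ennreal (b - a) * horizontal_slice_energy A G y"
proof -
  have "ennreal ((u (b, y) - u (a, y))\<^sup>2)
      \<le> ennreal (b - a) * (\<integral>\<^sup>+s. ennreal ((fst (G (s, y)))\<^sup>2) * indicator {a<..<b} s \<partial>lborel)"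
    using square_diff_le_segment_energy[OF assms(1-3), of "(0, y)" "(1, 0)"]
    by (simp add: inner_Pair_0)
  also have "\<dots> \<le> ennreal (b - a) * (\<integral>\<^sup>+s. ennreal ((norm (G (s, y)))\<^sup>2) * indicator A (s, y) \<partial>lborel)"
    using assms(4) power2_fst_le_power2_norm
    by (intro mult_left_mono nn_integral_mono) (auto simp: indicator_def intro!: ennreal_leI)
  finally show ?thesis
    unfolding horizontal_slice_energy_def .
qed

section \<open>The strip above a Lipschitz graph\<close>

lemma mem_Gamma_set: "(x, y) \<in> Gamma_set g a1 a2 \<longleftrightarrow> a1 < x \<and> x < a2 \<and> y = g x"
  by (auto simp: Gamma_set_def)

lemma mem_R_set: "(x, y) \<in> R_set g a1 a2 b \<longleftrightarrow> a1 < x \<and> x < a2 \<and> g x < y \<and> y < g x + b"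
  by (simp add: R_set_def)

locale lipschitz_strip =
  fixes g :: "real \<Rightarrow> real" and L a1 a2 b :: real
  assumes lipschitz: "L-lipschitz_on UNIV g" and a12: "a1 < a2" and b: "0 < b"
begin

abbreviation "R \<equiv> R_set g a1 a2 b"
abbreviation "\<Gamma> \<equiv> Gamma_set g a1 a2"

lemma L_nonneg: "0 \<le> L"
  using lipschitz by (rule lipschitz_on_nonneg)

lemma continuous_g: "continuous_on UNIV g"
  using lipschitz by (rule lipschitz_on_continuous_on)

lemma open_R: "open R"
proof -
  have "R = {z. a1 < fst z} \<inter> {z. fst z < a2} \<inter> {z. g (fst z) < snd z} \<inter> {z. snd z < g (fst z) + b}"
    by (auto simp: R_set_def)
  then show ?thesis
    by (simp only:) (intro open_Int open_Collect_less continuous_intros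
        continuous_on_compose2[OF continuous_g], auto)
qed

lemma R_borel [measurable]: "R \<in> sets borel"
  using open_R by simp

lemma Gamma_borel: "\<Gamma> \<in> sets borel"
proof -
  have "\<Gamma> = ({z. a1 < fst z} \<inter> {z. fst z < a2}) \<inter> {z. snd z = g (fst z)}"
    by (auto simp: Gamma_set_def)
  moreover have "closed {z :: pt. snd z = g (fst z)}"
    by (intro closed_Collect_eq continuous_intros continuous_on_compose2[OF continuous_g]) auto
  moreover have "open ({z :: pt. a1 < fst z} \<inter> {z. fst z < a2})"
    by (intro open_Int open_Collect_less continuous_intros)
  ultimately show ?thesis
    by (simp only:) (intro sets.Int borel_open borel_closed)
qed

lemma in_frontier_R:
  assumes "z \<notin> R" "\<And>e. 0 < e \<Longrightarrow> \<exists>w\<in>R. dist w z < e"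
  shows "z \<in> frontier R"
  using assms open_R by (simp add: frontier_def interior_open closure_approachable)

lemma Gamma_subset_frontier: "\<Gamma> \<subseteq> frontier R"
proof
  fix z assume "z \<in> \<Gamma>"
  then obtain x where x: "z = (x, g x)" "a1 < x" "x < a2"
    by (auto simp: Gamma_set_def)
  show "z \<in> frontier R"
  proof (rule in_frontier_R)
    fix e :: real assume "0 < e"
    then have "(x, g x + min (e / 2) (b / 2)) \<in> R" "dist (x, g x + min (e / 2) (b / 2)) z < e"
      using x b by (auto simp: mem_R_set dist_Pair_Pair dist_real_def)
    then show "\<exists>w\<in>R. dist w z < e" by blast
  qed (use x in \<open>simp add: mem_R_set\<close>)
qed

lemma top_in_frontier:
  assumes "x \<in> {a1<..<a2}"
  shows "(x, g x + b) \<in> frontier R - \<Gamma>"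
proof -
  have "(x, g x + b) \<in> frontier R"
  proof (rule in_frontier_R)
    fix e :: real assume "0 < e"
    then have "(x, g x + b - min (e / 2) (b / 2)) \<in> R" "dist (x, g x + b - min (e / 2) (b / 2)) (x, g x + b) < e"
      using assms b by (auto simp: mem_R_set dist_Pair_Pair dist_real_def)
    then show "\<exists>w\<in>R. dist w (x, g x + b) < e" by blast
  qed (simp add: mem_R_set)
  then show ?thesis
    using b by (simp add: mem_Gamma_set)
qed

lemma side_in_frontier:
  assumes "y \<in> {g a1<..<g a1 + b}"
  shows "(a1, y) \<in> frontier R - \<Gamma>"
proof -
  have "(a1, y) \<in> frontier R"
  proof (rule in_frontier_R)
    fix e :: real assume "0 < e"
    define m where "m = min (y - g a1) (g a1 + b - y)"
    have m: "0 < m"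
      using assms by (simp add: m_def)
    obtain t where t: "0 < t" "t < e" "t < min (a2 - a1) (m / (L + 1))"
      using field_lbound_gt_zero[of e "min (a2 - a1) (m / (L + 1))"] \<open>0 < e\<close> m a12 L_nonneg by auto
    then have "t < a2 - a1" "(L + 1) * t < m"
      using L_nonneg by (simp_all add: field_simps)
    have "\<bar>g (a1 + t) - g a1\<bar> \<le> L * t"
      using lipschitz_onD[OF lipschitz, of "a1 + t" a1] t by (simp add: dist_real_def)
    also have "\<dots> < m"
      using \<open>(L + 1) * t < m\<close> t by (simp add: algebra_simps)
    finally have "(a1 + t, y) \<in> R"
      using t \<open>t < a2 - a1\<close> by (auto simp: mem_R_set m_def abs_less_iff)
    moreover have "dist (a1 + t, y) (a1, y) < e"
      using t by (simp add: dist_Pair_Pair dist_real_def)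
    ultimately show "\<exists>w\<in>R. dist w (a1, y) < e" by blast
  qed (simp add: mem_R_set)
  then show ?thesis
    by (simp add: mem_Gamma_set)
qed

lemma graph_lipschitz: "(1 + L)-lipschitz_on UNIV (\<lambda>x. (x, g x))"
proof (rule lipschitz_onI)
  fix x y :: real
  have "dist (x, g x) (y, g y) \<le> dist x y + dist (g x) (g y)"
    using sqrt_sum_squares_le_sum_abs by (simp add: dist_Pair_Pair dist_real_def)
  also have "dist (g x) (g y) \<le> L * dist x y"
    using lipschitz by (rule lipschitz_onD) auto
  finally show "dist (x, g x) (y, g y) \<le> (1 + L) * dist x y"
    by (simp add: algebra_simps)
qed (use L_nonneg in simp)

text \<open>The broken line from \<open>(x, g x)\<close> up to \<open>(x, y)\<close> and then left to the side point
  \<open>(a1, y)\<close> stays in \<open>R\<close>; this is the only place where a wide strip is needed.\<close>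
lemma side_window_in_R:
  assumes wide: "(2 * L + 1) * (a2 - a1) \<le> b" and x: "x \<in> {a1<..<a2}"
    and y: "g x + L * (a2 - a1) < y" "y < g x + L * (a2 - a1) + (a2 - a1)"
  shows "y \<in> {g a1<..<g a1 + b}" "\<And>s. s \<in> {a1<..<x} \<Longrightarrow> (s, y) \<in> R" "\<And>r. r \<in> {g x<..<y} \<Longrightarrow> (x, r) \<in> R"
proof -
  have wide': "2 * (L * (a2 - a1)) + (a2 - a1) \<le> b"
    using wide by (simp add: algebra_simps)
  have osc: "\<bar>g s - g x\<bar> \<le> L * (a2 - a1)" if "s \<in> {a1..a2}" for s
  proof -
    have "\<bar>g s - g x\<bar> \<le> L * \<bar>s - x\<bar>"
      using lipschitz_onD[OF lipschitz, of s x] by (simp add: dist_real_def)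
    also have "\<dots> \<le> L * (a2 - a1)"
      using that x L_nonneg by (intro mult_left_mono) auto
    finally show ?thesis .
  qed
  show "y \<in> {g a1<..<g a1 + b}"
    using osc[of a1] a12 wide' y by (auto simp: abs_le_iff)
  show "(s, y) \<in> R" if "s \<in> {a1<..<x}" for s
    using osc[of s] that x y wide' by (auto simp: mem_R_set abs_le_iff)
  show "(x, r) \<in> R" if "r \<in> {g x<..<y}" for r
    using that x y wide' mult_nonneg_nonneg[OF L_nonneg, of "a2 - a1"] a12 by (auto simp: mem_R_set)
qed

section \<open>The trace inequality for smooth functions\<close>

context
  fixes u :: "pt \<Rightarrow> real" and G :: "pt \<Rightarrow> pt"
  assumes u_has_derivative: "\<And>z. (u has_derivative (\<lambda>h. G z \<bullet> h)) (at z)"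
    and continuous_G: "continuous_on UNIV G"
begin

lemma continuous_u: "continuous_on UNIV u"
  using u_has_derivative by (meson continuous_at_imp_continuous_on has_derivative_continuous)

lemma measurable_u [measurable]: "u \<in> borel_measurable borel"
  using continuous_u by (rule borel_measurable_continuous_onI)

lemma measurable_G [measurable]: "G \<in> borel_measurable borel"
  using continuous_G by (rule borel_measurable_continuous_onI)

lemma graph_integral_le_top:
  "(\<integral>\<^sup>+x\<in>{a1<..<a2}. ennreal ((u (x, g x))\<^sup>2) \<partial>lborel)
    \<le> 2 * (\<integral>\<^sup>+x\<in>{a1<..<a2}. ennreal ((u (x, g x + b))\<^sup>2) \<partial>lborel) + ennreal (2 * b) * dirichlet_energy R G"
proof -
  define K where "K = vertical_slice_energy R G"
  have K: "(\<integral>\<^sup>+x. K x \<partial>lborel) = dirichlet_energy R G" "K \<in> borel_measurable borel"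
    unfolding K_def by (intro dirichlet_energy_vertical_slices R_borel measurable_G)+
  have [measurable]: "g \<in> borel_measurable borel"
    using continuous_g by (rule borel_measurable_continuous_onI)
  have "ennreal ((u (x, g x))\<^sup>2) * indicator {a1<..<a2} x
      \<le> 2 * (ennreal ((u (x, g x + b))\<^sup>2) * indicator {a1<..<a2} x) + ennreal (2 * b) * K x" for x
  proof (cases "x \<in> {a1<..<a2}")
    case True
    have "ennreal ((u (x, g x + b) - u (x, g x))\<^sup>2) \<le> ennreal b * K x"
      using square_diff_le_vertical_slice_energy[OF u_has_derivative continuous_G, of "g x" "g x + b" x R]
        True b by (simp add: K_def mem_R_set)
    moreover have "ennreal ((u (x, g x))\<^sup>2)
        \<le> 2 * ennreal ((u (x, g x + b))\<^sup>2) + 2 * ennreal ((u (x, g x + b) - u (x, g x))\<^sup>2)"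
      using ennreal_power2_diff_le[of "u (x, g x + b)" "u (x, g x + b) - u (x, g x)"] by simp
    ultimately show ?thesis
      using True b by (simp add: ennreal_mult mult.assoc) (meson add_left_mono mult_left_mono order_trans zero_le)
  qed simp
  then have "(\<integral>\<^sup>+x\<in>{a1<..<a2}. ennreal ((u (x, g x))\<^sup>2) \<partial>lborel)
      \<le> (\<integral>\<^sup>+x. 2 * (ennreal ((u (x, g x + b))\<^sup>2) * indicator {a1<..<a2} x) + ennreal (2 * b) * K x \<partial>lborel)"
    by (intro nn_integral_mono)
  also have "\<dots> = 2 * (\<integral>\<^sup>+x\<in>{a1<..<a2}. ennreal ((u (x, g x + b))\<^sup>2) \<partial>lborel) + ennreal (2 * b) * dirichlet_energy R G"
    using K by (simp add: nn_integral_add nn_integral_cmult)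
  finally show ?thesis .
qed

lemma graph_value_le_side:
  assumes wide: "(2 * L + 1) * (a2 - a1) \<le> b" and x: "x \<in> {a1<..<a2}"
    and y: "g x + L * (a2 - a1) < y" "y < g x + L * (a2 - a1) + (a2 - a1)"
  shows "ennreal ((u (x, g x))\<^sup>2)
    \<le> 3 * (ennreal ((u (a1, y))\<^sup>2) * indicator {g a1<..<g a1 + b} y)
      + 3 * (ennreal (a2 - a1) * horizontal_slice_energy R G y)
      + 3 * (ennreal ((L + 1) * (a2 - a1)) * vertical_slice_energy R G x)"
proof -
  note window = side_window_in_R[OF wide x y]
  have "ennreal ((u (x, y) - u (a1, y))\<^sup>2) \<le> ennreal (x - a1) * horizontal_slice_energy R G y"
    using x window(2) by (intro square_diff_le_horizontal_slice_energy u_has_derivative continuous_G) auto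
  also have "\<dots> \<le> ennreal (a2 - a1) * horizontal_slice_energy R G y"
    using x by (intro mult_right_mono ennreal_leI) auto
  finally have horizontal: "ennreal ((u (x, y) - u (a1, y))\<^sup>2) \<le> ennreal (a2 - a1) * horizontal_slice_energy R G y" .
  have "ennreal ((u (x, y) - u (x, g x))\<^sup>2) \<le> ennreal (y - g x) * vertical_slice_energy R G x"
    using y window(3) mult_nonneg_nonneg[OF L_nonneg, of "a2 - a1"] a12
    by (intro square_diff_le_vertical_slice_energy u_has_derivative continuous_G) auto
  also have "\<dots> \<le> ennreal ((L + 1) * (a2 - a1)) * vertical_slice_energy R G x"
    using y by (intro mult_right_mono ennreal_leI) (auto simp: algebra_simps)
  finally have vertical: "ennreal ((u (x, y) - u (x, g x))\<^sup>2) \<le> ennreal ((L + 1) * (a2 - a1)) * vertical_slice_energy R G x" .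
  have "ennreal ((u (x, g x))\<^sup>2) \<le> 3 * ennreal ((u (a1, y))\<^sup>2)
      + 3 * ennreal ((u (x, y) - u (a1, y))\<^sup>2) + 3 * ennreal ((u (x, y) - u (x, g x))\<^sup>2)"
    using ennreal_power2_add_diff_le[of "u (a1, y)" "u (x, y) - u (a1, y)" "u (x, y) - u (x, g x)"]
    by simp
  also have "\<dots> \<le> 3 * ennreal ((u (a1, y))\<^sup>2) + 3 * (ennreal (a2 - a1) * horizontal_slice_energy R G y)
      + 3 * (ennreal ((L + 1) * (a2 - a1)) * vertical_slice_energy R G x)"
    by (intro add_mono mult_left_mono horizontal vertical order_refl) simp_all
  finally show ?thesis
    using window(1) by simp
qed

lemma graph_value_le_side_average:
  assumes wide: "(2 * L + 1) * (a2 - a1) \<le> b" and x: "x \<in> {a1<..<a2}"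
  shows "ennreal (a2 - a1) * ennreal ((u (x, g x))\<^sup>2)
    \<le> 3 * (\<integral>\<^sup>+y\<in>{g a1<..<g a1 + b}. ennreal ((u (a1, y))\<^sup>2) \<partial>lborel)
      + ennreal (a2 - a1) * (3 * dirichlet_energy R G)
      + ennreal (a2 - a1) * (3 * ennreal ((L + 1) * (a2 - a1)) * vertical_slice_energy R G x)"
proof -
  define e where "e = ennreal (a2 - a1)"
  define c where "c = g x + L * (a2 - a1)"
  have H: "(\<integral>\<^sup>+y. horizontal_slice_energy R G y \<partial>lborel) = dirichlet_energy R G"
    "horizontal_slice_energy R G \<in> borel_measurable borel"
    by (intro dirichlet_energy_horizontal_slices R_borel measurable_G)+
  have "e * ennreal ((u (x, g x))\<^sup>2) = (\<integral>\<^sup>+y. ennreal ((u (x, g x))\<^sup>2) * indicator {c<..<c + (a2 - a1)} y \<partial>lborel)"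
    using a12 by (subst nn_integral_cmult_indicator) (auto simp: e_def mult.commute)
  also have "\<dots> \<le> (\<integral>\<^sup>+y. 3 * (ennreal ((u (a1, y))\<^sup>2) * indicator {g a1<..<g a1 + b} y)
      + 3 * (e * horizontal_slice_energy R G y)
      + 3 * (ennreal ((L + 1) * (a2 - a1)) * vertical_slice_energy R G x) * indicator {c<..<c + (a2 - a1)} y \<partial>lborel)"
    using graph_value_le_side[OF wide x] by (intro nn_integral_mono) (auto simp: indicator_def c_def e_def)
  also have "\<dots> = 3 * (\<integral>\<^sup>+y\<in>{g a1<..<g a1 + b}. ennreal ((u (a1, y))\<^sup>2) \<partial>lborel) + 3 * (e * dirichlet_energy R G)
      + 3 * (ennreal ((L + 1) * (a2 - a1)) * vertical_slice_energy R G x) * e"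
    using H a12 by (simp add: e_def nn_integral_add nn_integral_cmult nn_integral_cmult_indicator)
  finally show ?thesis
    by (simp add: e_def mult_ac)
qed

lemma graph_integral_le_side:
  assumes wide: "(2 * L + 1) * (a2 - a1) \<le> b"
  shows "(\<integral>\<^sup>+x\<in>{a1<..<a2}. ennreal ((u (x, g x))\<^sup>2) \<partial>lborel)
    \<le> 3 * (\<integral>\<^sup>+y\<in>{g a1<..<g a1 + b}. ennreal ((u (a1, y))\<^sup>2) \<partial>lborel)
      + 3 * ennreal ((L + 2) * (a2 - a1)) * dirichlet_energy R G"
proof -
  define e where "e = ennreal (a2 - a1)"
  define S where "S = (\<integral>\<^sup>+y\<in>{g a1<..<g a1 + b}. ennreal ((u (a1, y))\<^sup>2) \<partial>lborel)"
  define D where "D = dirichlet_energy R G"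
  define K where "K = vertical_slice_energy R G"
  have K: "(\<integral>\<^sup>+x. K x \<partial>lborel) = D" "K \<in> borel_measurable borel"
    unfolding K_def D_def by (intro dirichlet_energy_vertical_slices R_borel measurable_G)+
  have e: "e \<noteq> 0" "e \<noteq> top"
    using a12 by (auto simp: e_def)
  have [measurable]: "g \<in> borel_measurable borel"
    using continuous_g by (rule borel_measurable_continuous_onI)
  have "e * (\<integral>\<^sup>+x\<in>{a1<..<a2}. ennreal ((u (x, g x))\<^sup>2) \<partial>lborel)
      = (\<integral>\<^sup>+x. e * (ennreal ((u (x, g x))\<^sup>2) * indicator {a1<..<a2} x) \<partial>lborel)"
    by (simp add: e_def nn_integral_cmult)
  also have "\<dots> \<le> (\<integral>\<^sup>+x. (3 * S + e * (3 * D)) * indicator {a1<..<a2} x + e * (3 * ennreal ((L + 1) * (a2 - a1)) * K x) \<partial>lborel)"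
    using graph_value_le_side_average[OF wide]
    by (intro nn_integral_mono) (auto simp: indicator_def S_def D_def K_def e_def)
  also have "\<dots> = (3 * S + e * (3 * D)) * e + e * (3 * ennreal ((L + 1) * (a2 - a1)) * D)"
    using K a12 by (simp add: e_def nn_integral_add nn_integral_cmult nn_integral_cmult_indicator)
  also have "\<dots> = e * (3 * S + e * (3 * D) + 3 * ennreal ((L + 1) * (a2 - a1)) * D)"
    by (simp add: distrib_left mult_ac)
  finally have "(\<integral>\<^sup>+x\<in>{a1<..<a2}. ennreal ((u (x, g x))\<^sup>2) \<partial>lborel)
      \<le> 3 * S + e * (3 * D) + 3 * ennreal ((L + 1) * (a2 - a1)) * D"
    by (subst (asm) ennreal_mult_le_mult_iff[OF e])
  also have "\<dots> = 3 * S + 3 * (e + ennreal ((L + 1) * (a2 - a1))) * D"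
    by (simp add: distrib_left distrib_right mult_ac)
  also have "e + ennreal ((L + 1) * (a2 - a1)) = ennreal ((a2 - a1) + (L + 1) * (a2 - a1))"
    using L_nonneg a12 by (simp add: e_def ennreal_plus)
  also have "(a2 - a1) + (L + 1) * (a2 - a1) = (L + 2) * (a2 - a1)"
    by (simp add: algebra_simps)
  finally show ?thesis
    by (simp add: S_def D_def mult.assoc)
qed

lemma graph_integral_le_boundary:
  "(\<integral>\<^sup>+x\<in>{a1<..<a2}. ennreal ((u (x, g x))\<^sup>2) \<partial>lborel)
    \<le> 3 * ((\<integral>\<^sup>+y\<in>{g a1<..<g a1 + b}. ennreal ((u (a1, y))\<^sup>2) \<partial>lborel)
        + (\<integral>\<^sup>+x\<in>{a1<..<a2}. ennreal ((u (x, g x + b))\<^sup>2) \<partial>lborel))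
      + ennreal (6 * (L + 1) * (a2 - a1)) * dirichlet_energy R G"
  (is "?P \<le> 3 * (?S + ?T) + ?c * ?D")
proof (cases "(2 * L + 1) * (a2 - a1) \<le> b")
  case True
  have "3 * ennreal ((L + 2) * (a2 - a1)) = ennreal (3 * ((L + 2) * (a2 - a1)))"
    using L_nonneg a12 by (simp add: ennreal_mult)
  also have "\<dots> \<le> ?c"
    using L_nonneg a12 mult_left_mono[of a1 a2 L] by (intro ennreal_leI) (simp add: algebra_simps)
  finally have "3 * ennreal ((L + 2) * (a2 - a1)) \<le> ?c" .
  then have "3 * ?S + 3 * ennreal ((L + 2) * (a2 - a1)) * ?D \<le> 3 * (?S + ?T) + ?c * ?D"
    by (intro add_mono mult_right_mono mult_left_mono) auto
  with graph_integral_le_side[OF True] show ?thesis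
    by order
next
  case False
  have "ennreal (2 * b) \<le> ?c"
    using False L_nonneg a12 mult_left_mono[of a1 a2 L] by (intro ennreal_leI) (simp add: algebra_simps)
  then have "2 * ?T + ennreal (2 * b) * ?D \<le> 3 * (?S + ?T) + ?c * ?D"
    by (intro add_mono mult_right_mono) (auto intro: order_trans[OF mult_right_mono[of 2 3]])
  with graph_integral_le_top show ?thesis
    by order
qed

lemma boundary_parts_le_H1:
  assumes H: "\<And>A. A \<in> sets borel \<Longrightarrow> emeasure H1 A = hausdorff1 A"
  shows "(\<integral>\<^sup>+y\<in>{g a1<..<g a1 + b}. ennreal ((u (a1, y))\<^sup>2) \<partial>lborel)
      \<le> (\<integral>\<^sup>+z\<in>frontier R - \<Gamma>. ennreal ((u z)\<^sup>2) \<partial>H1)"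
    and "(\<integral>\<^sup>+x\<in>{a1<..<a2}. ennreal ((u (x, g x + b))\<^sup>2) \<partial>lborel)
      \<le> (\<integral>\<^sup>+z\<in>frontier R - \<Gamma>. ennreal ((u z)\<^sup>2) \<partial>H1)"
proof -
  have cont: "continuous_on A (\<lambda>x. (u (\<gamma> x))\<^sup>2)" if "continuous_on A \<gamma>" for A and \<gamma> :: "real \<Rightarrow> pt"
    by (intro continuous_intros continuous_on_compose2[OF continuous_u that]) auto
  have coordinates: "\<bar>fst z - fst w\<bar> \<le> dist z w" "\<bar>snd z - snd w\<bar> \<le> dist z w" for z w :: pt
    using dist_fst_le[of z w] dist_snd_le[of z w] by (simp_all add: dist_real_def)
  have "(\<integral>\<^sup>+y\<in>{g a1<..<g a1 + b}. ennreal ((u (a1, y))\<^sup>2) \<partial>lborel)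
      \<le> (\<integral>\<^sup>+z\<in>(\<lambda>y. (a1, y)) ` {g a1<..<g a1 + b}. ennreal ((u z)\<^sup>2) \<partial>H1)"
    using b coordinates(2)
    by (intro nn_integral_le_H1_curve[OF H, where pr = snd] cont) (auto intro!: continuous_intros)
  also have "\<dots> \<le> (\<integral>\<^sup>+z\<in>frontier R - \<Gamma>. ennreal ((u z)\<^sup>2) \<partial>H1)"
    using side_in_frontier by (intro nn_integral_mono) (auto simp: indicator_def)
  finally show "(\<integral>\<^sup>+y\<in>{g a1<..<g a1 + b}. ennreal ((u (a1, y))\<^sup>2) \<partial>lborel)
      \<le> (\<integral>\<^sup>+z\<in>frontier R - \<Gamma>. ennreal ((u z)\<^sup>2) \<partial>H1)" .
  have "(\<integral>\<^sup>+x\<in>{a1<..<a2}. ennreal ((u (x, g x + b))\<^sup>2) \<partial>lborel)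
      \<le> (\<integral>\<^sup>+z\<in>(\<lambda>x. (x, g x + b)) ` {a1<..<a2}. ennreal ((u z)\<^sup>2) \<partial>H1)"
    using a12 coordinates(1) continuous_on_subset[OF continuous_g]
    by (intro nn_integral_le_H1_curve[OF H, where pr = fst] cont) (auto intro!: continuous_intros)
  also have "\<dots> \<le> (\<integral>\<^sup>+z\<in>frontier R - \<Gamma>. ennreal ((u z)\<^sup>2) \<partial>H1)"
    using top_in_frontier by (intro nn_integral_mono) (auto simp: indicator_def)
  finally show "(\<integral>\<^sup>+x\<in>{a1<..<a2}. ennreal ((u (x, g x + b))\<^sup>2) \<partial>lborel)
      \<le> (\<integral>\<^sup>+z\<in>frontier R - \<Gamma>. ennreal ((u z)\<^sup>2) \<partial>H1)" .
qed

lemma H1_Gamma_le_graph_integral: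
  assumes H: "\<And>A. A \<in> sets borel \<Longrightarrow> emeasure H1 A = hausdorff1 A"
  shows "(\<integral>\<^sup>+z\<in>\<Gamma>. ennreal ((u z)\<^sup>2) \<partial>H1) \<le> ennreal (1 + L) * (\<integral>\<^sup>+x\<in>{a1<..<a2}. ennreal ((u (x, g x))\<^sup>2) \<partial>lborel)"
proof -
  have "\<Gamma> \<subseteq> (\<lambda>x. (x, g x)) ` {a1..a2}"
    by (auto simp: Gamma_set_def)
  then have "(\<integral>\<^sup>+z\<in>\<Gamma>. ennreal ((u z)\<^sup>2) \<partial>H1) \<le> (\<integral>\<^sup>+z\<in>(\<lambda>x. (x, g x)) ` {a1..a2}. ennreal ((u z)\<^sup>2) \<partial>H1)"
    by (intro nn_integral_mono) (auto simp: indicator_def)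
  also have "\<dots> \<le> ennreal (1 + L) * (\<integral>\<^sup>+x\<in>{a1..a2}. ennreal ((u (x, g x))\<^sup>2) \<partial>lborel)"
    using continuous_on_subset[OF continuous_g]
    by (intro nn_integral_H1_curve_le[OF H a12] lipschitz_on_subset[OF graph_lipschitz] continuous_intros
        continuous_on_compose2[OF continuous_u]) auto
  also have "(\<integral>\<^sup>+x\<in>{a1..a2}. ennreal ((u (x, g x))\<^sup>2) \<partial>lborel)
      = (\<integral>\<^sup>+x\<in>{a1<..<a2}. ennreal ((u (x, g x))\<^sup>2) \<partial>lborel)"
    using AE_lborel_singleton[of a1] AE_lborel_singleton[of a2]
    by (intro nn_integral_cong_AE) (auto simp: indicator_def)
  finally show ?thesis .
qed

lemma smooth_trace_inequality:
  assumes H: "\<And>A. A \<in> sets borel \<Longrightarrow> emeasure H1 A = hausdorff1 A"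
  shows "(\<integral>\<^sup>+z\<in>\<Gamma>. ennreal ((u z)\<^sup>2) \<partial>H1)
    \<le> ennreal (1 + L) * (6 * (\<integral>\<^sup>+z\<in>frontier R - \<Gamma>. ennreal ((u z)\<^sup>2) \<partial>H1)
      + ennreal (6 * (L + 1) * (a2 - a1)) * dirichlet_energy R G)"
proof -
  define Z where "Z = (\<integral>\<^sup>+z\<in>frontier R - \<Gamma>. ennreal ((u z)\<^sup>2) \<partial>H1)"
  have "3 * ((\<integral>\<^sup>+y\<in>{g a1<..<g a1 + b}. ennreal ((u (a1, y))\<^sup>2) \<partial>lborel)
      + (\<integral>\<^sup>+x\<in>{a1<..<a2}. ennreal ((u (x, g x + b))\<^sup>2) \<partial>lborel)) \<le> 3 * (Z + Z)"
    unfolding Z_def using boundary_parts_le_H1[OF H] by (intro mult_left_mono add_mono) auto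
  also have "3 * (Z + Z) = 6 * Z"
    by (simp add: mult_2[symmetric] mult.assoc[symmetric])
  finally have graph: "(\<integral>\<^sup>+x\<in>{a1<..<a2}. ennreal ((u (x, g x))\<^sup>2) \<partial>lborel)
      \<le> 6 * Z + ennreal (6 * (L + 1) * (a2 - a1)) * dirichlet_energy R G"
    using graph_integral_le_boundary by (elim add_right_mono[THEN order_trans[rotated]])
  have "(\<integral>\<^sup>+z\<in>\<Gamma>. ennreal ((u z)\<^sup>2) \<partial>H1) \<le> ennreal (1 + L) * (\<integral>\<^sup>+x\<in>{a1<..<a2}. ennreal ((u (x, g x))\<^sup>2) \<partial>lborel)"
    by (intro H1_Gamma_le_graph_integral H)
  also have "\<dots> \<le> ennreal (1 + L) * (6 * Z + ennreal (6 * (L + 1) * (a2 - a1)) * dirichlet_energy R G)"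
    using graph by (rule mult_left_mono) simp
  finally show ?thesis
    unfolding Z_def .
qed

end

section \<open>Traces of \<open>H\<^sup>1\<close> functions\<close>

lemma trace_on_Gamma_le_approximation:
  assumes H: "\<And>A. A \<in> sets borel \<Longrightarrow> emeasure H1 A = hausdorff1 A"
    and U: "smooth2 U" and [measurable]: "t \<in> borel_measurable borel"
    and t: "AE z in H1. z \<in> frontier R - \<Gamma> \<longrightarrow> t z = 0"
    and w: "(\<lambda>z. indicator R z *\<^sub>R w z) \<in> borel_measurable borel"
  defines "B \<equiv> \<integral>\<^sup>+z\<in>frontier R. ennreal ((U z - t z)\<^sup>2) \<partial>H1"
  shows "(\<integral>\<^sup>+z\<in>\<Gamma>. ennreal ((t z)\<^sup>2) \<partial>H1)
    \<le> 2 * ennreal (1 + L) * (12 * B + ennreal (6 * (L + 1) * (a2 - a1)) *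
        (2 * dirichlet_energy R w + 2 * dirichlet_energy R (\<lambda>z. grad U z - w z))) + 2 * B"
proof -
  have [measurable]: "U \<in> borel_measurable borel" "grad U \<in> borel_measurable borel"
    "\<Gamma> \<in> sets borel" "frontier R \<in> sets borel"
    using smooth2_has_derivative_grad[OF U] smooth2_continuous_grad[OF U] Gamma_borel
    by (auto intro!: borel_measurable_continuous_onI continuous_at_imp_continuous_on
        has_derivative_continuous)
  have [measurable]: "U \<in> borel_measurable H1" "t \<in> borel_measurable H1"
    by (simp_all add: borel_measurable_H1)
  have boundary_part: "(\<integral>\<^sup>+z\<in>S. ennreal ((U z - t z)\<^sup>2) \<partial>H1) \<le> B" if "S \<subseteq> frontier R" for S
    unfolding B_def using that by (intro nn_integral_mono) (auto simp: indicator_def)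
  have "(\<integral>\<^sup>+z\<in>frontier R - \<Gamma>. ennreal ((t z)\<^sup>2) \<partial>H1) = (\<integral>\<^sup>+z. 0 \<partial>H1)"
    using t by (intro nn_integral_cong_AE) (auto elim!: eventually_mono simp: indicator_def)
  then have "(\<integral>\<^sup>+z\<in>frontier R - \<Gamma>. ennreal ((U z)\<^sup>2) \<partial>H1)
      \<le> 2 * (\<integral>\<^sup>+z\<in>frontier R - \<Gamma>. ennreal ((U z - t z)\<^sup>2) \<partial>H1)"
    using set_nn_integral_power2_diff_le[of "\<lambda>z. U z - t z" H1 "\<lambda>z. - t z" "frontier R - \<Gamma>"] by simp
  also have "\<dots> \<le> 2 * B"
    using boundary_part[of "frontier R - \<Gamma>"] by (intro mult_left_mono) auto
  finally have "(\<integral>\<^sup>+z\<in>frontier R - \<Gamma>. ennreal ((U z)\<^sup>2) \<partial>H1) \<le> 2 * B" .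
  moreover have "dirichlet_energy R (grad U) \<le> 2 * dirichlet_energy R w + 2 * dirichlet_energy R (\<lambda>z. grad U z - w z)"
  proof -
    have "(\<lambda>z. indicator R z *\<^sub>R (grad U z - w z)) \<in> borel_measurable borel"
      unfolding scaleR_diff_right by (intro borel_measurable_diff w) measurable
    then show ?thesis
      using dirichlet_energy_add_le[OF w, of "\<lambda>z. grad U z - w z"] by simp
  qed
  moreover have "(\<integral>\<^sup>+z\<in>\<Gamma>. ennreal ((U z)\<^sup>2) \<partial>H1) \<le> ennreal (1 + L) *
      (6 * (\<integral>\<^sup>+z\<in>frontier R - \<Gamma>. ennreal ((U z)\<^sup>2) \<partial>H1) + ennreal (6 * (L + 1) * (a2 - a1)) * dirichlet_energy R (grad U))"
    by (intro smooth_trace_inequality smooth2_has_derivative_grad[OF U] smooth2_continuous_grad[OF U] H)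
  ultimately have "(\<integral>\<^sup>+z\<in>\<Gamma>. ennreal ((U z)\<^sup>2) \<partial>H1) \<le> ennreal (1 + L) * (6 * (2 * B) + ennreal (6 * (L + 1) * (a2 - a1)) *
        (2 * dirichlet_energy R w + 2 * dirichlet_energy R (\<lambda>z. grad U z - w z)))"
    by (elim order_trans) (intro mult_left_mono add_mono; simp)
  moreover have "(\<integral>\<^sup>+z\<in>\<Gamma>. ennreal ((t z)\<^sup>2) \<partial>H1)
      \<le> 2 * (\<integral>\<^sup>+z\<in>\<Gamma>. ennreal ((U z)\<^sup>2) \<partial>H1) + 2 * B"
    using set_nn_integral_power2_diff_le[of U H1 "\<lambda>z. U z - t z" \<Gamma>] boundary_part[OF Gamma_subset_frontier]
    by (simp add: order_trans[OF _ add_left_mono] mult_left_mono)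
  ultimately show ?thesis
    by (elim order_trans) (intro add_right_mono; simp add: mult.assoc mult_left_mono)
qed

lemma trace_on_Gamma_le_energy_limit:
  assumes H: "\<And>A. A \<in> sets borel \<Longrightarrow> emeasure H1 A = hausdorff1 A"
    and w: "H1_weak_grad R v w" and trace: "has_trace R v w t"
    and t: "AE z in H1. z \<in> frontier R - \<Gamma> \<longrightarrow> t z = 0"
  shows "(\<integral>\<^sup>+z\<in>\<Gamma>. ennreal ((t z)\<^sup>2) \<partial>H1)
    \<le> 2 * ennreal (1 + L) * (ennreal (6 * (L + 1) * (a2 - a1)) * (2 * dirichlet_energy R w))"
proof -
  obtain U where U: "\<And>n. smooth2 (U n)"
    and interior: "(\<lambda>n. \<integral>\<^sup>+z\<in>R. ennreal ((U n z - v z)\<^sup>2 + (norm (grad (U n) z - w z))\<^sup>2) \<partial>lborel) \<longlonglongrightarrow> 0"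
    and boundary: "(\<lambda>n. \<integral>\<^sup>+z\<in>frontier R. ennreal ((U n z - t z)\<^sup>2) \<partial>H1) \<longlonglongrightarrow> 0"
    and t_meas: "t \<in> borel_measurable borel"
    using trace unfolding has_trace_def by blast
  define c where "c = ennreal (6 * (L + 1) * (a2 - a1))"
  define A where "A n = dirichlet_energy R (\<lambda>z. grad (U n) z - w z)" for n
  define B where "B n = (\<integral>\<^sup>+z\<in>frontier R. ennreal ((U n z - t z)\<^sup>2) \<partial>H1)" for n
  have "A \<longlonglongrightarrow> 0"
  proof (rule tendsto_sandwich[OF _ _ tendsto_const interior])
    show "\<forall>\<^sub>F n in sequentially. A n \<le> (\<integral>\<^sup>+z\<in>R. ennreal ((U n z - v z)\<^sup>2 + (norm (grad (U n) z - w z))\<^sup>2) \<partial>lborel)"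
      unfolding A_def dirichlet_energy_def by (intro always_eventually allI nn_integral_mono) (auto simp: indicator_def)
  qed simp
  then have "(\<lambda>n. 2 * ennreal (1 + L) * (12 * B n + c * (2 * dirichlet_energy R w + 2 * A n)) + 2 * B n)
      \<longlonglongrightarrow> 2 * ennreal (1 + L) * (12 * 0 + c * (2 * dirichlet_energy R w + 2 * 0)) + 2 * 0"
    using boundary unfolding B_def c_def
    by (intro tendsto_add ennreal_tendsto_cmult tendsto_const) (auto simp: ennreal_mult_less_top)
  moreover have "(\<integral>\<^sup>+z\<in>\<Gamma>. ennreal ((t z)\<^sup>2) \<partial>H1)
      \<le> 2 * ennreal (1 + L) * (12 * B n + c * (2 * dirichlet_energy R w + 2 * A n)) + 2 * B n" for n
    unfolding A_def B_def c_def
    by (rule trace_on_Gamma_le_approximation[OF H U t_meas t H1_weak_grad_measurable[OF w]])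
  ultimately show ?thesis
    unfolding c_def by (intro tendsto_lowerbound[where F = sequentially]) (auto intro: always_eventually)
qed

lemma trace_on_Gamma_le_energy:
  assumes "H1_weak_grad R v w" "has_trace R v w t" "AE z in H1. z \<in> frontier R - \<Gamma> \<longrightarrow> t z = 0"
  shows "(\<integral>\<^sup>+z\<in>\<Gamma>. ennreal ((t z)\<^sup>2) \<partial>H1) \<le> ennreal (24 * (1 + L)\<^sup>2 * (a2 - a1)) * dirichlet_energy R w"
  using emeasure_H1_cases
proof
  assume "\<forall>A. emeasure H1 A = 0"
  then have "AE z in H1. False"
    by (intro AE_I'[of UNIV]) (auto simp: null_sets_def sets_H1)
  then have "(\<integral>\<^sup>+z\<in>\<Gamma>. ennreal ((t z)\<^sup>2) \<partial>H1) = (\<integral>\<^sup>+z. 0 \<partial>H1)"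
    by (intro nn_integral_cong_AE) auto
  then show ?thesis by simp
next
  assume "\<forall>A\<in>sets borel. emeasure H1 A = hausdorff1 A"
  then have "(\<integral>\<^sup>+z\<in>\<Gamma>. ennreal ((t z)\<^sup>2) \<partial>H1)
      \<le> 2 * ennreal (1 + L) * (ennreal (6 * (L + 1) * (a2 - a1)) * (2 * dirichlet_energy R w))"
    using assms by (intro trace_on_Gamma_le_energy_limit) auto
  also have "\<dots> = ennreal (2 * (1 + L) * (6 * (L + 1) * (a2 - a1)) * 2) * dirichlet_energy R w"
  proof -
    have "0 \<le> 1 + L" "0 \<le> 6 * (L + 1) * (a2 - a1)"
      using L_nonneg a12 by simp_all
    then have "ennreal (2 * (1 + L) * (6 * (L + 1) * (a2 - a1)) * 2)
        = 2 * ennreal (1 + L) * ennreal (6 * (L + 1) * (a2 - a1)) * 2"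
      by (simp only: ennreal_mult'' ennreal_numeral zero_le_numeral)
    then show ?thesis
      by (simp only: mult_ac)
  qed
  also have "2 * (1 + L) * (6 * (L + 1) * (a2 - a1)) * 2 = 24 * (1 + L)\<^sup>2 * (a2 - a1)"
    by (simp add: power2_eq_square algebra_simps)
  finally show ?thesis .
qed

lemma K_const_ge: "ereal (1 / (24 * (1 + L)\<^sup>2 * (a2 - a1))) \<le> K_const \<Gamma> R"
  unfolding K_const_def
proof (intro Inf_greatest, clarify)
  fix v w t
  assume w: "H1_weak_grad R v w" and trace: "has_trace R v w t"
    and one: "(\<integral>\<^sup>+z\<in>\<Gamma>. ennreal ((t z)\<^sup>2) \<partial>H1) = 1" and t: "AE z in H1. z \<in> frontier R - \<Gamma> \<longrightarrow> t z = 0"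
  define k where "k = 24 * (1 + L)\<^sup>2 * (a2 - a1)"
  have "0 < k"
    using L_nonneg a12 by (simp add: k_def)
  have "1 \<le> ennreal k * ennreal (LINT z:R|lborel. (norm (w z))\<^sup>2)"
    using trace_on_Gamma_le_energy[OF w trace t] by (simp add: one k_def H1_weak_grad_dirichlet_energy[OF w])
  also have "\<dots> = ennreal (k * (LINT z:R|lborel. (norm (w z))\<^sup>2))"
    using \<open>0 < k\<close> by (intro ennreal_mult'[symmetric]) simp
  finally show "ereal (1 / k) \<le> ereal (LINT z:R|lborel. (norm (w z))\<^sup>2)"
    using \<open>0 < k\<close> by (simp add: field_simps)
qed

end

lemma lipschitz_on_clamp:
  fixes g :: "real \<Rightarrow> real"
  assumes "L-lipschitz_on {p..q} g" "p \<le> q"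
  shows "L-lipschitz_on UNIV (\<lambda>x. g (max p (min q x)))"
proof -
  have "1-lipschitz_on UNIV (\<lambda>x :: real. max p (min q x))"
    by (intro lipschitz_onI) (auto simp: dist_real_def)
  then have "(L * 1)-lipschitz_on UNIV (g \<circ> (\<lambda>x. max p (min q x)))"
    using assms by (intro lipschitz_on_compose lipschitz_on_subset[OF assms(1)]) auto
  then show ?thesis
    by (simp add: o_def)
qed

theorem proposition4p5:
  fixes g :: "real \<Rightarrow> real" and a0 L :: real
  assumes "a0 > 0"
    and "L-lipschitz_on {0..a0} g"
    and "\<forall>x\<in>{0..a0}. g x \<ge> 0"
  shows "\<forall>M::real. \<exists>\<delta>>0. \<forall>a1 a2 b. 0 \<le> a1 \<and> a1 < a2 \<and> a2 \<le> a0 \<and> a2 - a1 < \<delta> \<and> b > 0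
           \<longrightarrow> K_const (Gamma_set g a1 a2) (R_set g a1 a2 b) \<ge> ereal M"
proof
  fix M :: real
  define k where "k = 24 * (1 + L)\<^sup>2"
  have "0 < k"
    using lipschitz_on_nonneg[OF assms(2)] by (simp add: k_def)
  show "\<exists>\<delta>>0. \<forall>a1 a2 b. 0 \<le> a1 \<and> a1 < a2 \<and> a2 \<le> a0 \<and> a2 - a1 < \<delta> \<and> b > 0
      \<longrightarrow> K_const (Gamma_set g a1 a2) (R_set g a1 a2 b) \<ge> ereal M"
  proof (intro exI[of _ "1 / (k * (\<bar>M\<bar> + 1))"] conjI allI impI)
    fix a1 a2 b :: real
    assume a: "0 \<le> a1 \<and> a1 < a2 \<and> a2 \<le> a0 \<and> a2 - a1 < 1 / (k * (\<bar>M\<bar> + 1)) \<and> 0 < b"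
    \<comment> \<open>\<open>g\<close> is Lipschitz only on \<open>{0..a0}\<close>; the clamped \<open>g'\<close> is Lipschitz everywhere and
      defines the same \<open>R\<close> and \<open>\<Gamma>\<close>.\<close>
    define g' where "g' x = g (max a1 (min a2 x))" for x
    interpret lipschitz_strip g' L a1 a2 b
      unfolding g'_def using a
      by unfold_locales (auto intro!: lipschitz_on_clamp lipschitz_on_subset[OF assms(2)])
    have "(\<bar>M\<bar> + 1) * (k * (a2 - a1)) < 1"
      using a \<open>0 < k\<close> by (simp add: pos_less_divide_eq mult_ac)
    then have "M \<le> 1 / (k * (a2 - a1))"
      using a \<open>0 < k\<close> by (simp add: pos_less_divide_eq[symmetric])
    moreover have "R_set g a1 a2 b = R" "Gamma_set g a1 a2 = \<Gamma>"
      by (auto simp: R_set_def Gamma_set_def g'_def)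
    ultimately show "ereal M \<le> K_const (Gamma_set g a1 a2) (R_set g a1 a2 b)"
      using K_const_ge by (simp add: k_def) (meson ereal_less_eq(3) order_trans)
  qed (use \<open>0 < k\<close> in simp)
qed

end
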